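(* In the setting of the Pauli-path expansion described in the context, let $k\ge0$ be an integer and let $\widetilde A_L:=\sum_{\gamma:\ r(\gamma)\le k}\mathrm{coef}(\gamma)\,Q_L(\gamma)$ be the operator obtained by discarding every Pauli path with more than $k$ non-identity updates. If $k>eL\tau$, then $$\|A_L-\widetilde A_L\|_1\;\le\;2^n\,e^{\tau L}\Big(\frac{eL\tau}{k}\Big)^{k},$$ where $\|\cdot\|_1$ is the trace norm.
   Context: Pauli-path expansion. Let $n\ge1$ and $\mathcal P_n=\{I,X,Y,Z\}^{\otimes n}$. Fix $\tau>0$, an integer $L\ge1$, and a sequence $P_1,\dots,P_L$ of Hermitian operators, each of the form $\pm P$ with $P\in\mathcal P_n\setminus\{I^{\otimes n}\}$. Define $\mathcal E_t(X)=e^{-\tau P_t/2}\,X\,e^{-\tau P_t/2}$ and $A_L:=\mathcal E_L\circ\cdots\circ\mathcal E_1(\mathbb I)$. For $Q\in\mathcal P_n$: if $P_t$ anticommutes with $Q$ then $\mathcal E_t(Q)=Q$; if $P_t$ commutes with $Q$ then $\mathcal E_t(Q)=\cosh(\tau)Q-\sinh(\tau)P_tQ$, where $P_tQ=s\,Q'$ for a unique sign $s\in\{\pm1\}$ and $Q'\in\mathcal P_n$. A Pauli path is a sequence $\gamma=(Q_0,Q_1,\dots,Q_L)$ of elements of $\mathcal P_n$ with $Q_0=\mathbb I$ such that for each $t\in\{1,\dots,L\}$ exactly one of the following holds: (a) $P_t$ anticommutes with $Q_{t-1}$ and $Q_t=Q_{t-1}$ (step factor $1$); (b) $P_t$ commutes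 with $Q_{t-1}$ and $Q_t=Q_{t-1}$ (step factor $\cosh\tau$); (c) $P_t$ commutes with $Q_{t-1}$ and $Q_t=Q'$ where $P_tQ_{t-1}=sQ'$ (step factor $-s\sinh\tau$; this is called a non-identity update). $\mathrm{coef}(\gamma)$ is the product of the $L$ step factors, $r(\gamma)$ is the number of non-identity updates, and $Q_t(\gamma)$ denotes the $t$-th entry. Then $A_L=\sum_\gamma\mathrm{coef}(\gamma)\,Q_L(\gamma)$, the sum ranging over all Pauli paths. *)

theory Defs
  imports "Jordan_Normal_Form.Schur_Decomposition" "Jordan_Normal_Form.Char_Poly"
    "HOL-Library.Multiset"
begin

datatype pauli = PI | PX | PY | PZ

fun pauli1 :: "pauli \<Rightarrow> nat \<Rightarrow> nat \<Rightarrow> complex" where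
  "pauli1 PI i j = (if i = j then 1 else 0)"
| "pauli1 PX i j = (if i \<noteq> j then 1 else 0)"
| "pauli1 PY i j = (if i = 0 \<and> j = 1 then - \<i> else if i = 1 \<and> j = 0 then \<i> else 0)"
| "pauli1 PZ i j = (if i = j then (if i = 0 then 1 else -1) else 0)"

text \<open>The 2^n x 2^n matrix of a Pauli string of length n: the tensor product
  of the single-qubit factors, qubit q being bit q of the row/column index.\<close>
definition pauli_mat :: "pauli list \<Rightarrow> complex mat" where
  "pauli_mat qs = mat (2 ^ length qs) (2 ^ length qs)
     (\<lambda>(i, j). \<Prod>q<length qs. pauli1 (qs ! q) (i div 2 ^ q mod 2) (j div 2 ^ q mod 2))"

definition signed_pauli_mat :: "real \<times> pauli list \<Rightarrow> complex mat" where
  "signed_pauli_mat sp = complex_of_real (fst sp) \<cdot>\<^sub>m pauli_mat (snd sp)"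

definition commutes :: "complex mat \<Rightarrow> complex mat \<Rightarrow> bool" where
  "commutes A B \<longleftrightarrow> A * B = B * A"

definition anticommutes :: "complex mat \<Rightarrow> complex mat \<Rightarrow> bool" where
  "anticommutes A B \<longleftrightarrow> A * B = - (B * A)"

definition mat_exp :: "complex mat \<Rightarrow> complex mat" where
  "mat_exp M = mat (dim_row M) (dim_col M)
     (\<lambda>(i, j). \<Sum>k. (M ^\<^sub>m k) $$ (i, j) / of_nat (fact k))"

definition chan :: "real \<Rightarrow> complex mat \<Rightarrow> complex mat \<Rightarrow> complex mat" where
  "chan \<tau> P X = (let E = mat_exp (complex_of_real (- \<tau> / 2) \<cdot>\<^sub>m P) in E * X * E)"

text \<open>\<open>A_L = E_L \<circ> ... \<circ> E_1 (identity)\<close>; Ps lists (P_1,...,P_L) in order.\<close>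
definition A_op :: "nat \<Rightarrow> real \<Rightarrow> (real \<times> pauli list) list \<Rightarrow> complex mat" where
  "A_op n \<tau> Ps = foldl (\<lambda>X sp. chan \<tau> (signed_pauli_mat sp) X) (1\<^sub>m (2 ^ n)) Ps"

definition nonid_step :: "complex mat \<Rightarrow> pauli list \<Rightarrow> pauli list \<Rightarrow> bool" where
  "nonid_step P Q Q' \<longleftrightarrow> commutes P (pauli_mat Q) \<and>
     (\<exists>s::real. (s = 1 \<or> s = -1) \<and> P * pauli_mat Q = complex_of_real s \<cdot>\<^sub>m pauli_mat Q')"

definition valid_step :: "complex mat \<Rightarrow> pauli list \<Rightarrow> pauli list \<Rightarrow> bool" where
  "valid_step P Q Q' \<longleftrightarrow>
     (anticommutes P (pauli_mat Q) \<and> Q' = Q)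
   \<or> (commutes P (pauli_mat Q) \<and> Q' = Q)
   \<or> nonid_step P Q Q'"

definition step_factor :: "real \<Rightarrow> complex mat \<Rightarrow> pauli list \<Rightarrow> pauli list \<Rightarrow> real" where
  "step_factor \<tau> P Q Q' =
     (if nonid_step P Q Q' then
        - (THE s::real. (s = 1 \<or> s = -1) \<and> P * pauli_mat Q = complex_of_real s \<cdot>\<^sub>m pauli_mat Q')
          * sinh \<tau>
      else if commutes P (pauli_mat Q) then cosh \<tau>
      else 1)"

text \<open>A Pauli path is represented as the list \<open>[Q_0, Q_1, ..., Q_L]\<close>.\<close>
definition pauli_paths :: "nat \<Rightarrow> (real \<times> pauli list) list \<Rightarrow> pauli list list set" where
  "pauli_paths n Ps = {\<gamma>. length \<gamma> = Suc (length Ps) \<and> (\<forall>Q\<in>set \<gamma>. length Q = n)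
      \<and> \<gamma> ! 0 = replicate n PI
      \<and> (\<forall>t\<in>{1..length Ps}. valid_step (signed_pauli_mat (Ps ! (t - 1))) (\<gamma> ! (t - 1)) (\<gamma> ! t))}"

definition path_coef :: "real \<Rightarrow> (real \<times> pauli list) list \<Rightarrow> pauli list list \<Rightarrow> real" where
  "path_coef \<tau> Ps \<gamma> = (\<Prod>t\<in>{1..length Ps}.
      step_factor \<tau> (signed_pauli_mat (Ps ! (t - 1))) (\<gamma> ! (t - 1)) (\<gamma> ! t))"

definition path_r :: "(real \<times> pauli list) list \<Rightarrow> pauli list list \<Rightarrow> nat" where
  "path_r Ps \<gamma> = card {t\<in>{1..length Ps}.
      nonid_step (signed_pauli_mat (Ps ! (t - 1))) (\<gamma> ! (t - 1)) (\<gamma> ! t)}"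

definition A_trunc :: "nat \<Rightarrow> real \<Rightarrow> (real \<times> pauli list) list \<Rightarrow> nat \<Rightarrow> complex mat" where
  "A_trunc n \<tau> Ps k = mat (2 ^ n) (2 ^ n) (\<lambda>(i, j).
      \<Sum>\<gamma>\<in>{\<gamma>\<in>pauli_paths n Ps. path_r Ps \<gamma> \<le> k}.
        complex_of_real (path_coef \<tau> Ps \<gamma>) * pauli_mat (last \<gamma>) $$ (i, j))"

text \<open>Sum of the singular values: square roots of the eigenvalues (with
  multiplicity) of \<open>A\<^sup>\<dagger> A\<close>.\<close>
definition trace_norm :: "complex mat \<Rightarrow> real" where
  "trace_norm A = sum_mset (image_mset (\<lambda>z. sqrt (Re z))
      (proots (char_poly (mat_adjoint A * A))))"

end

(* Each E_t fixes a Pauli string Q that anticommutes with P_t, and maps a commuting one to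
   cosh(tau) Q - sinh(tau) P_t Q, because exp(-tau P_t / 2) = cosh(tau/2) - sinh(tau/2) P_t for the
   involution P_t. Unfolding A_L step by step gives the path expansion, so A_L minus the truncated
   operator is the sum of coef(gamma) Q_L(gamma) over the paths with more than k non-identity updates.

   A real combination of Pauli strings has trace norm at most 2^n times the l1-norm of its
   coefficients: by Cauchy-Schwarz on the singular values the trace norm is at most sqrt(2^n) times
   the Frobenius norm, and every row of a Pauli string has a single entry, of modulus 1.

   The l1-norm of the discarded coefficients is bounded by a Chernoff argument: for y >= 1 it is at
   most y^-k times the sum of |coef(gamma)| y^r(gamma) over all paths, which factorises over the steps
   into at most (cosh tau + y sinh tau)^L <= (e^tau (1 + y tau))^L. Choosing y = k / (L tau) and using
   (1 + k/L)^L <= e^k yields e^(tau L) (e L tau / k)^k. *)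

theory Submission
  imports Defs "HOL-Analysis.Convex"
begin

fun pauli_mult :: "pauli \<Rightarrow> pauli \<Rightarrow> pauli" where
  "pauli_mult PI b = b"
| "pauli_mult a PI = a"
| "pauli_mult PX PX = PI" | "pauli_mult PY PY = PI" | "pauli_mult PZ PZ = PI"
| "pauli_mult PX PY = PZ" | "pauli_mult PY PX = PZ"
| "pauli_mult PY PZ = PX" | "pauli_mult PZ PY = PX"
| "pauli_mult PZ PX = PY" | "pauli_mult PX PZ = PY"

fun pauli_phase :: "pauli \<Rightarrow> pauli \<Rightarrow> complex" where
  "pauli_phase PX PY = \<i>" | "pauli_phase PY PX = - \<i>"
| "pauli_phase PY PZ = \<i>" | "pauli_phase PZ PY = - \<i>"
| "pauli_phase PZ PX = \<i>" | "pauli_phase PX PZ = - \<i>"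
| "pauli_phase _ _ = 1"

lemma pauli1_mult:
  assumes "i < 2" "j < 2"
  shows "pauli1 a i 0 * pauli1 b 0 j + pauli1 a i 1 * pauli1 b 1 j
    = pauli_phase a b * pauli1 (pauli_mult a b) i j"
  using assms by (cases a; cases b) (auto simp: less_2_cases_iff)

lemma pauli_mult_self [simp]: "pauli_mult a a = PI"
  by (cases a) auto

lemma pauli_phase_self [simp]: "pauli_phase a a = 1"
  by (cases a) auto

lemma pauli_mult_commute: "pauli_mult a b = pauli_mult b a"
  by (cases a; cases b) auto

lemma pauli_mult_eq_PI_iff: "pauli_mult a b = PI \<longleftrightarrow> a = b"
  by (cases a; cases b) auto

lemma pauli_phase_swap: "pauli_phase a b * pauli_phase b a = 1"
  by (cases a; cases b) auto

lemma pauli_phase_fourth_root: "pauli_phase a b \<in> {1, -1, \<i>, -\<i>}"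
  by (cases a; cases b) auto

lemma pauli1_trace: "pauli1 a 0 0 + pauli1 a 1 1 = (if a = PI then 2 else 0)"
  by (cases a) auto

lemma pauli1_norm_le: "cmod (pauli1 a i j) \<le> 1"
  by (cases a) auto

lemma pauli1_row_norm_sum: "i < 2 \<Longrightarrow> cmod (pauli1 a i 0) + cmod (pauli1 a i 1) = 1"
  by (cases a) (auto simp: less_2_cases_iff)

lemma smult_one_mat [simp]: "(1::'a::monoid_mult) \<cdot>\<^sub>m A = A"
  by (rule eq_matI) auto

lemma smult_smult_mat: "a \<cdot>\<^sub>m (b \<cdot>\<^sub>m A) = (a * b) \<cdot>\<^sub>m (A :: 'a::semigroup_mult mat)"
  by (rule eq_matI) (auto simp: mult.assoc)

lemma uminus_smult_mat: "- (a \<cdot>\<^sub>m A) = (- a) \<cdot>\<^sub>m (A :: 'a::ring mat)"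
  by (rule eq_matI) auto

lemma smult_mat_cancel:
  assumes "a \<noteq> 0" "a \<cdot>\<^sub>m A = a \<cdot>\<^sub>m (B :: 'a::field mat)"
  shows "A = B"
proof -
  have "(inverse a \<cdot>\<^sub>m (a \<cdot>\<^sub>m A)) = (inverse a \<cdot>\<^sub>m (a \<cdot>\<^sub>m B))" using assms(2) by simp
  then show ?thesis using assms(1) by (simp add: smult_smult_mat)
qed

lemma smult_mult_smult_mat:
  assumes "A \<in> carrier_mat n m" "B \<in> carrier_mat m k"
  shows "(a \<cdot>\<^sub>m A) * (b \<cdot>\<^sub>m B) = (a * b) \<cdot>\<^sub>m (A * (B :: 'a::comm_semiring_0 mat))"
proof -
  have "(a \<cdot>\<^sub>m A) * (b \<cdot>\<^sub>m B) = a \<cdot>\<^sub>m (A * (b \<cdot>\<^sub>m B))"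
    using assms by (intro mult_smult_assoc_mat) auto
  also have "\<dots> = (a * b) \<cdot>\<^sub>m (A * B)"
    using assms by (simp add: mult_smult_distrib smult_smult_mat)
  finally show ?thesis .
qed

section \<open>Pauli strings\<close>

lemma sum_prod_binary_digits:
  fixes f :: "nat \<Rightarrow> nat \<Rightarrow> 'a::comm_semiring_1"
  shows "(\<Sum>k<2^n. \<Prod>q<n. f q (k div 2^q mod 2)) = (\<Prod>q<n. f q 0 + f q 1)"
proof (induction n)
  case 0
  then show ?case by simp
next
  case (Suc n)
  let ?g = "\<lambda>k. \<Prod>q<n. f q (k div 2^q mod 2)"
  have high_digit: "(k + 2^n) div 2^q mod 2 = k div 2^q mod 2" if "q < n" for k q :: nat
  proof -
    obtain d where "n - q = Suc d" using \<open>q < n\<close> by (cases "n - q") auto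
    moreover have "(2::nat)^n = 2^(n-q) * 2^q" using \<open>q < n\<close> by (simp flip: power_add)
    ultimately show ?thesis by simp
  qed
  have lower: "(\<Sum>k<2^n. \<Prod>q<Suc n. f q (k div 2^q mod 2)) = (\<Sum>k<2^n. ?g k) * f n 0"
    by (simp add: sum_distrib_right)
  have "(\<Sum>k\<in>{2^n..<2^n + 2^n}. \<Prod>q<Suc n. f q (k div 2^q mod 2))
      = (\<Sum>k<2^n. \<Prod>q<Suc n. f q ((k + 2^n) div 2^q mod 2))"
    using sum.shift_bounds_nat_ivl[of "\<lambda>k. \<Prod>q<Suc n. f q (k div 2^q mod 2)" 0 "2^n" "2^n"]
    by (simp add: atLeast0LessThan)
  also have "\<dots> = (\<Sum>k<2^n. ?g k * f n 1)"
    by (intro sum.cong refl) (simp add: high_digit)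
  finally have upper: "(\<Sum>k\<in>{2^n..<2^n + 2^n}. \<Prod>q<Suc n. f q (k div 2^q mod 2))
      = (\<Sum>k<2^n. ?g k) * f n 1"
    by (simp add: sum_distrib_right)
  have split: "{..<2^Suc n} = {..<2^n} \<union> {2^n..<2^n + (2::nat)^n}" by auto
  have "(\<Sum>k<2^Suc n. \<Prod>q<Suc n. f q (k div 2^q mod 2))
      = (\<Sum>k<2^n. \<Prod>q<Suc n. f q (k div 2^q mod 2))
        + (\<Sum>k\<in>{2^n..<2^n + 2^n}. \<Prod>q<Suc n. f q (k div 2^q mod 2))"
    unfolding split by (subst sum.union_disjoint) auto
  also have "\<dots> = (\<Prod>q<n. f q 0 + f q 1) * (f n 0 + f n 1)"
    unfolding lower upper Suc by (simp add: distrib_left)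
  finally show ?case by simp
qed

lemma eq_if_binary_digits_eq:
  fixes i j :: nat
  assumes "i < 2^n" "j < 2^n" "\<forall>q<n. i div 2^q mod 2 = j div 2^q mod 2"
  shows "i = j"
  using assms
proof (induction n arbitrary: i j)
  case 0
  then show ?case by simp
next
  case (Suc n)
  have "i div 2 div 2^q = i div 2^Suc q" "j div 2 div 2^q = j div 2^Suc q" for q
    by (simp_all add: div_mult2_eq)
  then have "i div 2 = j div 2"
    using Suc.prems by (intro Suc.IH) auto
  moreover have "i mod 2 = j mod 2"
    using Suc.prems(3) by (metis power_0 div_by_1 zero_less_Suc)
  ultimately show ?case by (metis div_mult_mod_eq)
qed

lemma pauli_mat_dim [simp]:
  "dim_row (pauli_mat Q) = 2 ^ length Q" "dim_col (pauli_mat Q) = 2 ^ length Q"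
  by (auto simp: pauli_mat_def)

lemma pauli_mat_carrier [simp]: "pauli_mat Q \<in> carrier_mat (2 ^ length Q) (2 ^ length Q)"
  by (simp add: carrier_matI)

lemma pauli_mat_index:
  "i < 2 ^ length Q \<Longrightarrow> j < 2 ^ length Q \<Longrightarrow>
   pauli_mat Q $$ (i, j) = (\<Prod>q<length Q. pauli1 (Q ! q) (i div 2 ^ q mod 2) (j div 2 ^ q mod 2))"
  by (simp add: pauli_mat_def)

lemma index_mult_mat_sum:
  assumes "A \<in> carrier_mat nr m" "B \<in> carrier_mat m nc" "i < nr" "j < nc"
  shows "(A * B) $$ (i, j) = (\<Sum>k<m. A $$ (i, k) * B $$ (k, j))"
  using assms by (simp add: scalar_prod_def atLeast0LessThan)

lemma pauli_mat_mult:
  assumes "length R = length Q"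
  shows "pauli_mat Q * pauli_mat R =
    (\<Prod>q<length Q. pauli_phase (Q ! q) (R ! q)) \<cdot>\<^sub>m pauli_mat (map2 pauli_mult Q R)"
proof (rule eq_matI)
  let ?n = "length Q"
  let ?d = "\<lambda>k q. k div 2 ^ q mod 2"
  fix i j assume "i < dim_row ((\<Prod>q<?n. pauli_phase (Q ! q) (R ! q)) \<cdot>\<^sub>m pauli_mat (map2 pauli_mult Q R))"
    and "j < dim_col ((\<Prod>q<?n. pauli_phase (Q ! q) (R ! q)) \<cdot>\<^sub>m pauli_mat (map2 pauli_mult Q R))"
  then have i: "i < 2^?n" and j: "j < 2^?n" using assms by auto
  have "(pauli_mat Q * pauli_mat R) $$ (i, j) = (\<Sum>k<2^?n. pauli_mat Q $$ (i, k) * pauli_mat R $$ (k, j))"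
    using i j assms by (intro index_mult_mat_sum[of _ "2^?n" "2^?n"]) auto
  also have "\<dots> = (\<Sum>k<2^?n. \<Prod>q<?n. pauli1 (Q ! q) (?d i q) (?d k q) * pauli1 (R ! q) (?d k q) (?d j q))"
    using i j assms by (intro sum.cong refl) (simp add: pauli_mat_index prod.distrib)
  also have "\<dots> = (\<Prod>q<?n. pauli1 (Q ! q) (?d i q) 0 * pauli1 (R ! q) 0 (?d j q)
      + pauli1 (Q ! q) (?d i q) 1 * pauli1 (R ! q) 1 (?d j q))"
    by (rule sum_prod_binary_digits)
  also have "\<dots> = (\<Prod>q<?n. pauli_phase (Q ! q) (R ! q) * pauli1 (pauli_mult (Q ! q) (R ! q)) (?d i q) (?d j q))"
    by (intro prod.cong refl pauli1_mult) auto
  also have "\<dots> = ((\<Prod>q<?n. pauli_phase (Q ! q) (R ! q)) \<cdot>\<^sub>m pauli_mat (map2 pauli_mult Q R)) $$ (i, j)"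
    using i j assms by (simp add: pauli_mat_index prod.distrib)
  finally show "(pauli_mat Q * pauli_mat R) $$ (i, j) = \<dots>" .
qed (use assms in auto)

lemma pauli_mat_replicate_PI: "pauli_mat (replicate n PI) = 1\<^sub>m (2^n)"
proof (rule eq_matI)
  fix i j assume "i < dim_row (1\<^sub>m (2^n) :: complex mat)" "j < dim_col (1\<^sub>m (2^n) :: complex mat)"
  then have i: "i < 2^n" and j: "j < 2^n" by auto
  have "pauli_mat (replicate n PI) $$ (i,j) = (\<Prod>q<n. if i div 2 ^ q mod 2 = j div 2 ^ q mod 2 then 1 else 0)"
    using i j by (simp add: pauli_mat_index)
  also have "\<dots> = (if i = j then 1 else 0)"
    using eq_if_binary_digits_eq[OF i j] by auto
  finally show "pauli_mat (replicate n PI) $$ (i,j) = 1\<^sub>m (2^n) $$ (i,j)" using i j by simp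
qed auto

lemma pauli_mat_square: "pauli_mat Q * pauli_mat Q = 1\<^sub>m (2 ^ length Q)"
proof -
  have "map2 pauli_mult Q Q = replicate (length Q) PI"
    by (rule nth_equalityI) auto
  then show ?thesis by (simp add: pauli_mat_mult pauli_mat_replicate_PI)
qed

definition mat_trace :: "'a::comm_monoid_add mat \<Rightarrow> 'a" where
  "mat_trace A = (\<Sum>i<dim_row A. A $$ (i,i))"

lemma mat_trace_smult: "A \<in> carrier_mat N N \<Longrightarrow> mat_trace (a \<cdot>\<^sub>m A) = a * mat_trace (A :: 'a::semiring_0 mat)"
  by (simp add: mat_trace_def sum_distrib_left)

lemma mat_trace_one: "mat_trace (1\<^sub>m N :: 'a::semiring_1 mat) = of_nat N"
  by (simp add: mat_trace_def)

lemma pauli_mat_trace: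
  "mat_trace (pauli_mat Q) = (if Q = replicate (length Q) PI then 2 ^ length Q else 0)"
proof -
  let ?n = "length Q"
  have "mat_trace (pauli_mat Q) = (\<Sum>i<2^?n. \<Prod>q<?n. pauli1 (Q ! q) (i div 2 ^ q mod 2) (i div 2 ^ q mod 2))"
    by (simp add: mat_trace_def pauli_mat_index)
  also have "\<dots> = (\<Prod>q<?n. pauli1 (Q ! q) 0 0 + pauli1 (Q ! q) 1 1)"
    by (rule sum_prod_binary_digits)
  also have "\<dots> = (\<Prod>q<?n. if Q ! q = PI then 2 else 0)"
    by (intro prod.cong refl) (rule pauli1_trace)
  also have "\<dots> = (if Q = replicate (length Q) PI then 2 ^ length Q else 0)"
    by (auto simp: list_eq_iff_nth_eq)
  finally show ?thesis .
qed

lemma pauli_mat_row_norm_sum: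
  assumes "i < 2 ^ length Q"
  shows "(\<Sum>j<2 ^ length Q. cmod (pauli_mat Q $$ (i, j))) = 1"
proof -
  let ?n = "length Q" and ?d = "\<lambda>k q. k div 2 ^ q mod 2"
  have "(\<Sum>j<2 ^ ?n. cmod (pauli_mat Q $$ (i, j))) = (\<Sum>j<2^?n. \<Prod>q<?n. cmod (pauli1 (Q ! q) (?d i q) (?d j q)))"
    using assms by (intro sum.cong refl) (simp add: pauli_mat_index prod_norm)
  also have "\<dots> = (\<Prod>q<?n. cmod (pauli1 (Q ! q) (?d i q) 0) + cmod (pauli1 (Q ! q) (?d i q) 1))"
    by (rule sum_prod_binary_digits)
  also have "\<dots> = 1"
    by (intro prod.neutral ballI) (rule pauli1_row_norm_sum; simp)
  finally show ?thesis .
qed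

lemma pauli_mat_entry_norm_le:
  "i < 2 ^ length Q \<Longrightarrow> j < 2 ^ length Q \<Longrightarrow> cmod (pauli_mat Q $$ (i, j)) \<le> 1"
  by (simp add: pauli_mat_index prod_norm[symmetric] prod_le_1 pauli1_norm_le)

lemma pauli_mat_smult_cancel:
  assumes "a \<cdot>\<^sub>m pauli_mat Q = b \<cdot>\<^sub>m pauli_mat Q"
  shows "a = b"
proof -
  have "c \<cdot>\<^sub>m pauli_mat Q * pauli_mat Q = c \<cdot>\<^sub>m 1\<^sub>m (2 ^ length Q)" for c
    by (simp add: mult_smult_assoc_mat[OF pauli_mat_carrier pauli_mat_carrier] pauli_mat_square)
  then have "(a \<cdot>\<^sub>m 1\<^sub>m (2 ^ length Q)) $$ (0,0) = (b \<cdot>\<^sub>m 1\<^sub>m (2 ^ length Q)) $$ (0,0)"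
    using assms by metis
  then show "a = b" by simp
qed

lemma pauli_mat_smult_inject:
  assumes len: "length Q1 = length Q2" and "s1 \<noteq> 0"
    and eq: "s1 \<cdot>\<^sub>m pauli_mat Q1 = s2 \<cdot>\<^sub>m pauli_mat Q2"
  shows "Q1 = Q2"
proof -
  let ?n = "length Q1" and ?W = "map2 pauli_mult Q1 Q2"
  let ?c = "\<Prod>q<?n. pauli_phase (Q1 ! q) (Q2 ! q)"
  have "s1 \<cdot>\<^sub>m (pauli_mat Q1 * pauli_mat Q1) = s2 \<cdot>\<^sub>m (pauli_mat Q1 * pauli_mat Q2)"
    using arg_cong[OF eq, of "\<lambda>X. pauli_mat Q1 * X"] len by (metis mult_smult_distrib pauli_mat_carrier)
  then have "s1 \<cdot>\<^sub>m 1\<^sub>m (2^?n) = (s2 * ?c) \<cdot>\<^sub>m pauli_mat ?W"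
    using len by (simp add: pauli_mat_square pauli_mat_mult smult_smult_mat)
  then have "s1 * 2^?n = s2 * ?c * mat_trace (pauli_mat ?W)"
    using arg_cong[of _ _ mat_trace] len
    by (metis mat_trace_one mat_trace_smult one_carrier_mat pauli_mat_carrier of_nat_numeral of_nat_power)
  then have "mat_trace (pauli_mat ?W) \<noteq> 0" using \<open>s1 \<noteq> 0\<close> by auto
  then have "?W = replicate (length ?W) PI" by (simp add: pauli_mat_trace split: if_splits)
  then show "Q1 = Q2"
    using len by (simp add: list_eq_iff_nth_eq pauli_mult_eq_PI_iff)
qed

lemma pauli_phase_prod_fourth_root: "(\<Prod>q\<in>A. pauli_phase (f q) (g q)) \<in> {1, -1, \<i>, -\<i>}"
proof (induction A rule: infinite_finite_induct)
  case (insert x A)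
  then show ?case using pauli_phase_fourth_root[of "f x" "g x"] by auto
qed auto

lemma pauli_phase_prod_swap:
  "(\<Prod>q\<in>A. pauli_phase (f q) (g q)) * (\<Prod>q\<in>A. pauli_phase (g q) (f q)) = 1"
  by (simp add: prod.distrib[symmetric] pauli_phase_swap)

lemma fourth_root_of_unity_inverse:
  "x \<in> {1, -1, \<i>, -\<i>} \<Longrightarrow> x * y = 1 \<Longrightarrow> y = x \<or> y = - (x::complex)"
  using inverse_unique[of x y] by auto

lemma pauli_mat_mult_swap:
  assumes "length R = length Q"
  shows "pauli_mat R * pauli_mat Q =
    (\<Prod>q<length Q. pauli_phase (R ! q) (Q ! q)) \<cdot>\<^sub>m pauli_mat (map2 pauli_mult Q R)"
proof -
  have "map2 pauli_mult R Q = map2 pauli_mult Q R"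
    using assms by (simp add: list_eq_iff_nth_eq pauli_mult_commute)
  moreover have "pauli_mat R * pauli_mat Q =
      (\<Prod>q<length R. pauli_phase (R ! q) (Q ! q)) \<cdot>\<^sub>m pauli_mat (map2 pauli_mult R Q)"
    using assms by (intro pauli_mat_mult) simp
  ultimately show ?thesis by (simp only: assms)
qed

lemma pauli_mat_commute_or_anticommute:
  assumes "length R = length Q"
  shows "commutes (pauli_mat R) (pauli_mat Q) \<or> anticommutes (pauli_mat R) (pauli_mat Q)"
proof -
  let ?c = "\<Prod>q<length Q. pauli_phase (R ! q) (Q ! q)"
  let ?c' = "\<Prod>q<length Q. pauli_phase (Q ! q) (R ! q)"
  have RQ: "pauli_mat R * pauli_mat Q = ?c \<cdot>\<^sub>m pauli_mat (map2 pauli_mult R Q)"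
    using assms pauli_mat_mult[where Q = R and R = Q] by simp
  have QR: "pauli_mat Q * pauli_mat R = ?c' \<cdot>\<^sub>m pauli_mat (map2 pauli_mult R Q)"
    using assms pauli_mat_mult_swap[where Q = R and R = Q] by simp
  have "?c * ?c' = 1" by (rule pauli_phase_prod_swap)
  then consider "?c' = ?c" | "?c' = - ?c"
    using fourth_root_of_unity_inverse[OF pauli_phase_prod_fourth_root] by blast
  then show ?thesis
  proof cases
    case 1
    then have "commutes (pauli_mat R) (pauli_mat Q)"
      unfolding commutes_def RQ QR by simp
    then show ?thesis ..
  next
    case 2
    then have "anticommutes (pauli_mat R) (pauli_mat Q)"
      unfolding anticommutes_def RQ QR uminus_smult_mat by simp
    then show ?thesis ..
  qed
qed

text \<open>For commuting strings the phase is its own inverse, hence real.\<close>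
lemma pauli_mat_mult_commuting:
  assumes "length R = length Q" and "commutes (pauli_mat R) (pauli_mat Q)"
  shows "\<exists>s::real. (s = 1 \<or> s = -1) \<and>
    pauli_mat R * pauli_mat Q = complex_of_real s \<cdot>\<^sub>m pauli_mat (map2 pauli_mult R Q)"
proof -
  let ?c = "\<Prod>q<length Q. pauli_phase (R ! q) (Q ! q)"
  let ?c' = "\<Prod>q<length Q. pauli_phase (Q ! q) (R ! q)"
  have RQ: "pauli_mat R * pauli_mat Q = ?c \<cdot>\<^sub>m pauli_mat (map2 pauli_mult R Q)"
    using assms pauli_mat_mult[where Q = R and R = Q] by simp
  moreover have "pauli_mat Q * pauli_mat R = ?c' \<cdot>\<^sub>m pauli_mat (map2 pauli_mult R Q)"
    using assms pauli_mat_mult_swap[where Q = R and R = Q] by simp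
  ultimately have "?c \<cdot>\<^sub>m pauli_mat (map2 pauli_mult R Q) = ?c' \<cdot>\<^sub>m pauli_mat (map2 pauli_mult R Q)"
    using assms(2) by (simp add: commutes_def)
  then have "?c = ?c'" by (rule pauli_mat_smult_cancel)
  moreover have "?c * ?c' = 1" by (rule pauli_phase_prod_swap)
  ultimately have "?c\<^sup>2 = 1" by (metis power2_eq_square)
  then consider "?c = 1" | "?c = -1" by (auto simp: power2_eq_1_iff)
  then show ?thesis
  proof cases
    case 1
    then show ?thesis using RQ by (intro exI[of _ 1]) simp
  next
    case 2
    then show ?thesis using RQ by (intro exI[of _ "-1"]) simp
  qed
qed

definition signed_pauli_gate :: "nat \<Rightarrow> real \<times> pauli list \<Rightarrow> bool" where
  "signed_pauli_gate n sp \<longleftrightarrow>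
     (fst sp = 1 \<or> fst sp = -1) \<and> length (snd sp) = n \<and> snd sp \<noteq> replicate n PI"

definition successors :: "nat \<Rightarrow> complex mat \<Rightarrow> pauli list \<Rightarrow> pauli list set" where
  "successors n P Q = {Q'. length Q' = n \<and> valid_step P Q Q'}"

lemma signed_pauli_mat_carrier [simp]:
  "signed_pauli_mat sp \<in> carrier_mat (2 ^ length (snd sp)) (2 ^ length (snd sp))"
  by (simp add: signed_pauli_mat_def)

lemma signed_pauli_mat_square:
  assumes "fst sp = 1 \<or> fst sp = -1"
  shows "signed_pauli_mat sp * signed_pauli_mat sp = 1\<^sub>m (2 ^ length (snd sp))"
  using assms
  unfolding signed_pauli_mat_def smult_mult_smult_mat[OF pauli_mat_carrier pauli_mat_carrier]
  by (auto simp: pauli_mat_square)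

lemma commutes_smult_left_iff:
  assumes "A \<in> carrier_mat N N" "B \<in> carrier_mat N N" "a \<noteq> 0"
  shows "commutes (a \<cdot>\<^sub>m A) B \<longleftrightarrow> commutes A B"
  using assms smult_mat_cancel[OF \<open>a \<noteq> 0\<close>]
  by (auto simp: commutes_def mult_smult_assoc_mat[of _ N N] mult_smult_distrib[of _ N N])

lemma anticommutes_smult_left_iff:
  assumes "A \<in> carrier_mat N N" "B \<in> carrier_mat N N" "a \<noteq> 0"
  shows "anticommutes (a \<cdot>\<^sub>m A) B \<longleftrightarrow> anticommutes A B"
proof -
  have "- (a \<cdot>\<^sub>m X) = a \<cdot>\<^sub>m (- X)" for X :: "complex mat"
    by (rule eq_matI) auto
  then show ?thesis
    using assms smult_mat_cancel[OF \<open>a \<noteq> 0\<close>]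
    by (auto simp: anticommutes_def mult_smult_assoc_mat[of _ N N] mult_smult_distrib[of _ N N])
qed

context
  fixes n :: nat and sp :: "real \<times> pauli list" and Q :: "pauli list"
  assumes gate: "signed_pauli_gate n sp" and len: "length Q = n"
begin

private lemma sign_nonzero: "complex_of_real (fst sp) \<noteq> 0"
  using gate by (auto simp: signed_pauli_gate_def)

private lemma signed_carrier: "signed_pauli_mat sp \<in> carrier_mat (2^n) (2^n)"
  using gate signed_pauli_mat_carrier[of sp] by (simp add: signed_pauli_gate_def)

private lemma string_carrier: "pauli_mat Q \<in> carrier_mat (2^n) (2^n)"
  using len pauli_mat_carrier[of Q] by simp

private lemma unsigned_carrier: "pauli_mat (snd sp) \<in> carrier_mat (2^n) (2^n)"
  using gate pauli_mat_carrier[of "snd sp"] by (simp add: signed_pauli_gate_def)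

private lemma commutes_signed_iff:
  "commutes (signed_pauli_mat sp) (pauli_mat Q) \<longleftrightarrow> commutes (pauli_mat (snd sp)) (pauli_mat Q)"
  unfolding signed_pauli_mat_def by (rule commutes_smult_left_iff[OF unsigned_carrier string_carrier sign_nonzero])

private lemma anticommutes_signed_iff:
  "anticommutes (signed_pauli_mat sp) (pauli_mat Q) \<longleftrightarrow> anticommutes (pauli_mat (snd sp)) (pauli_mat Q)"
  unfolding signed_pauli_mat_def by (rule anticommutes_smult_left_iff[OF unsigned_carrier string_carrier sign_nonzero])

lemma signed_pauli_commutes_or_anticommutes:
  "commutes (signed_pauli_mat sp) (pauli_mat Q) \<or> anticommutes (signed_pauli_mat sp) (pauli_mat Q)"
  unfolding commutes_signed_iff anticommutes_signed_iff
  using gate len by (intro pauli_mat_commute_or_anticommute) (simp add: signed_pauli_gate_def)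

lemma nonid_step_if_commutes:
  assumes "commutes (signed_pauli_mat sp) (pauli_mat Q)"
  shows "nonid_step (signed_pauli_mat sp) Q (map2 pauli_mult (snd sp) Q)"
proof -
  obtain s :: real where s: "s = 1 \<or> s = -1"
    and SQ: "pauli_mat (snd sp) * pauli_mat Q =
      complex_of_real s \<cdot>\<^sub>m pauli_mat (map2 pauli_mult (snd sp) Q)"
    using pauli_mat_mult_commuting assms gate len
    by (auto simp: commutes_signed_iff signed_pauli_gate_def)
  have PQ: "signed_pauli_mat sp * pauli_mat Q =
      complex_of_real (fst sp * s) \<cdot>\<^sub>m pauli_mat (map2 pauli_mult (snd sp) Q)"
    unfolding signed_pauli_mat_def mult_smult_assoc_mat[OF unsigned_carrier string_carrier] SQ
    by (simp add: smult_smult_mat)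
  have "fst sp * s = 1 \<or> fst sp * s = -1"
    using gate s by (auto simp: signed_pauli_gate_def)
  then show ?thesis
    unfolding nonid_step_def using assms PQ by (intro conjI exI[of _ "fst sp * s"])
qed

text \<open>A non-identity Pauli string has trace 0, so it is not a multiple of the identity.\<close>
lemma not_nonid_step_self: "\<not> nonid_step (signed_pauli_mat sp) Q Q"
proof
  assume "nonid_step (signed_pauli_mat sp) Q Q"
  then obtain s :: real where s: "s = 1 \<or> s = -1"
    and PQ: "signed_pauli_mat sp * pauli_mat Q = complex_of_real s \<cdot>\<^sub>m pauli_mat Q"
    unfolding nonid_step_def by blast
  have "signed_pauli_mat sp = signed_pauli_mat sp * (pauli_mat Q * pauli_mat Q)"
    using signed_carrier len by (simp add: pauli_mat_square)
  also have "\<dots> = complex_of_real s \<cdot>\<^sub>m (pauli_mat Q * pauli_mat Q)"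
    unfolding assoc_mult_mat[OF signed_carrier string_carrier string_carrier, symmetric] PQ
    by (rule mult_smult_assoc_mat[OF string_carrier string_carrier])
  also have "\<dots> = complex_of_real s \<cdot>\<^sub>m 1\<^sub>m (2^n)"
    using len by (simp add: pauli_mat_square)
  finally have "mat_trace (signed_pauli_mat sp) = complex_of_real s * 2^n"
    by (simp add: mat_trace_smult[of _ "2^n"] mat_trace_one)
  moreover have "mat_trace (signed_pauli_mat sp) = 0"
    using gate by (simp add: signed_pauli_mat_def signed_pauli_gate_def mat_trace_smult[OF pauli_mat_carrier]
        pauli_mat_trace)
  ultimately show False using s by simp
qed

end

lemma nonid_step_unique:
  assumes "nonid_step P Q W" "nonid_step P Q W'" "length W = length W'"
  shows "W = W'"
proof -
  obtain s s' :: real where "s = 1 \<or> s = -1" "P * pauli_mat Q = complex_of_real s \<cdot>\<^sub>m pauli_mat W"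
    "P * pauli_mat Q = complex_of_real s' \<cdot>\<^sub>m pauli_mat W'"
    using assms(1,2) unfolding nonid_step_def by blast
  then have "complex_of_real s \<noteq> 0" "complex_of_real s \<cdot>\<^sub>m pauli_mat W = complex_of_real s' \<cdot>\<^sub>m pauli_mat W'"
    by auto
  then show ?thesis by (rule pauli_mat_smult_inject[OF assms(3)])
qed

lemma step_factor_nonid:
  assumes "nonid_step P Q W" and "s = 1 \<or> s = -1"
    and PQ: "P * pauli_mat Q = complex_of_real s \<cdot>\<^sub>m pauli_mat W"
  shows "step_factor \<tau> P Q W = - s * sinh \<tau>"
proof -
  have "(THE s. (s = 1 \<or> s = -1) \<and> P * pauli_mat Q = complex_of_real s \<cdot>\<^sub>m pauli_mat W) = s"
  proof (rule the_equality)
    fix s' assume "(s' = 1 \<or> s' = -1) \<and> P * pauli_mat Q = complex_of_real s' \<cdot>\<^sub>m pauli_mat W"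
    then have "complex_of_real s' = complex_of_real s"
      using PQ by (intro pauli_mat_smult_cancel[where Q = W]) simp
    then show "s' = s" by simp
  qed (use assms(2) PQ in simp)
  then show ?thesis using assms(1) by (simp add: step_factor_def)
qed

section \<open>The maps E_t\<close>

lemma smult_involution_power:
  assumes P: "P \<in> carrier_mat N N" and PP: "P * P = 1\<^sub>m N"
  shows "(b \<cdot>\<^sub>m P) ^\<^sub>m k = b ^ k \<cdot>\<^sub>m (if even k then 1\<^sub>m N else (P :: 'a::comm_semiring_1 mat))"
proof (induction k)
  case 0
  then show ?case using P by simp
next
  case (Suc k)
  have X: "(if even k then 1\<^sub>m N else P) \<in> carrier_mat N N" using P by simp
  have "(b \<cdot>\<^sub>m P) ^\<^sub>m Suc k = (b ^ k * b) \<cdot>\<^sub>m ((if even k then 1\<^sub>m N else P) * P)"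
    using Suc smult_mult_smult_mat[OF X P] by simp
  also have "\<dots> = b ^ Suc k \<cdot>\<^sub>m (if even (Suc k) then 1\<^sub>m N else P)"
    using P PP by (cases "even k") (auto simp: mult.commute)
  finally show ?case .
qed

text \<open>The even and odd terms of the exponential series are those of cosh and sinh.\<close>
lemma mat_exp_smult_involution:
  assumes P: "P \<in> carrier_mat N N" and PP: "P * P = 1\<^sub>m N"
  shows "mat_exp (complex_of_real a \<cdot>\<^sub>m P) =
     complex_of_real (cosh a) \<cdot>\<^sub>m 1\<^sub>m N + complex_of_real (sinh a) \<cdot>\<^sub>m P"
proof (rule eq_matI)
  fix i j assume "i < dim_row (complex_of_real (cosh a) \<cdot>\<^sub>m 1\<^sub>m N + complex_of_real (sinh a) \<cdot>\<^sub>m P)"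
    "j < dim_col (complex_of_real (cosh a) \<cdot>\<^sub>m 1\<^sub>m N + complex_of_real (sinh a) \<cdot>\<^sub>m P)"
  then have i: "i < N" and j: "j < N" using P by auto
  let ?d = "(1\<^sub>m N :: complex mat) $$ (i,j)" and ?p = "P $$ (i,j)"
  have series_term: "((complex_of_real a \<cdot>\<^sub>m P) ^\<^sub>m k) $$ (i, j) / of_nat (fact k) =
     complex_of_real (if even k then a ^ k / fact k else 0) * ?d
     + complex_of_real (if even k then 0 else a ^ k / fact k) * ?p" for k
    using i j P unfolding smult_involution_power[OF P PP] by (auto simp: of_real_power)
  have "(\<lambda>k. if even k then a ^ k /\<^sub>R fact k else 0) = (\<lambda>k. if even k then a ^ k / fact k else 0)"
    by (rule ext) (simp add: scaleR_conv_of_real divide_inverse mult.commute)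
  then have "(\<lambda>k. if even k then a ^ k / fact k else 0) sums cosh a"
    using cosh_converges[of a] by simp
  then have cosh: "(\<lambda>k. complex_of_real (if even k then a ^ k / fact k else 0)) sums complex_of_real (cosh a)"
    by (rule sums_of_real)
  have "(\<lambda>k. if even k then 0 else a ^ k /\<^sub>R fact k) = (\<lambda>k. if even k then 0 else a ^ k / fact k)"
    by (rule ext) (simp add: scaleR_conv_of_real divide_inverse mult.commute)
  then have "(\<lambda>k. if even k then 0 else a ^ k / fact k) sums sinh a"
    using sinh_converges[of a] by simp
  then have sinh: "(\<lambda>k. complex_of_real (if even k then 0 else a ^ k / fact k)) sums complex_of_real (sinh a)"
    by (rule sums_of_real)
  have "(\<lambda>k. ((complex_of_real a \<cdot>\<^sub>m P) ^\<^sub>m k) $$ (i, j) / of_nat (fact k)) sums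
      (complex_of_real (cosh a) * ?d + complex_of_real (sinh a) * ?p)"
    unfolding series_term by (intro sums_add sums_mult2 cosh sinh)
  then show "mat_exp (complex_of_real a \<cdot>\<^sub>m P) $$ (i,j) =
     (complex_of_real (cosh a) \<cdot>\<^sub>m 1\<^sub>m N + complex_of_real (sinh a) \<cdot>\<^sub>m P) $$ (i,j)"
    using i j P by (simp add: mat_exp_def sums_iff)
qed (use P in \<open>auto simp: mat_exp_def\<close>)

lemma affine_mult_left:
  assumes P: "P \<in> carrier_mat N N" and X: "X \<in> carrier_mat N N"
  shows "(c \<cdot>\<^sub>m 1\<^sub>m N + d \<cdot>\<^sub>m P) * X = c \<cdot>\<^sub>m X + d \<cdot>\<^sub>m (P * (X :: 'a::comm_semiring_1 mat))"
proof -
  have "(c \<cdot>\<^sub>m 1\<^sub>m N + d \<cdot>\<^sub>m P) * X = (c \<cdot>\<^sub>m 1\<^sub>m N) * X + (d \<cdot>\<^sub>m P) * X"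
    using P X by (intro add_mult_distrib_mat[of _ N N]) auto
  then show ?thesis
    using P X by (simp add: mult_smult_assoc_mat[of _ N N])
qed

lemma affine_mult_right:
  assumes P: "P \<in> carrier_mat N N" and X: "X \<in> carrier_mat N N"
  shows "X * (c \<cdot>\<^sub>m 1\<^sub>m N + d \<cdot>\<^sub>m P) = c \<cdot>\<^sub>m X + d \<cdot>\<^sub>m (X * (P :: 'a::comm_semiring_1 mat))"
proof -
  have "X * (c \<cdot>\<^sub>m 1\<^sub>m N + d \<cdot>\<^sub>m P) = X * (c \<cdot>\<^sub>m 1\<^sub>m N) + X * (d \<cdot>\<^sub>m P)"
    using P X by (intro mult_add_distrib_mat[of _ N N]) auto
  then show ?thesis
    using P X by (simp add: mult_smult_distrib[of _ N N] mult_smult_distrib[OF X one_carrier_mat])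
qed

lemma affine_sandwich:
  assumes P: "P \<in> carrier_mat N N" and X: "X \<in> carrier_mat N N"
  shows "(c \<cdot>\<^sub>m 1\<^sub>m N + d \<cdot>\<^sub>m P) * X * (c \<cdot>\<^sub>m 1\<^sub>m N + d \<cdot>\<^sub>m P) =
    c \<cdot>\<^sub>m (c \<cdot>\<^sub>m X + d \<cdot>\<^sub>m (P * X)) + d \<cdot>\<^sub>m (c \<cdot>\<^sub>m (X * P) + d \<cdot>\<^sub>m (P * X * (P :: 'a::comm_semiring_1 mat)))"
proof -
  have "(c \<cdot>\<^sub>m X + d \<cdot>\<^sub>m (P * X)) * P = c \<cdot>\<^sub>m (X * P) + d \<cdot>\<^sub>m (P * X * P)"
    using P X by (simp add: add_mult_distrib_mat[of _ N N] mult_smult_assoc_mat[of _ N N])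
  moreover have "c \<cdot>\<^sub>m X + d \<cdot>\<^sub>m (P * X) \<in> carrier_mat N N" using P X by auto
  ultimately show ?thesis
    by (simp add: affine_mult_left[OF P X] affine_mult_right[OF P])
qed

lemma chan_commuting:
  assumes P: "P \<in> carrier_mat N N" and PP: "P * P = 1\<^sub>m N" and X: "X \<in> carrier_mat N N"
    and comm: "P * X = X * P"
  shows "chan \<tau> P X = complex_of_real (cosh \<tau>) \<cdot>\<^sub>m X + complex_of_real (- sinh \<tau>) \<cdot>\<^sub>m (P * X)"
proof -
  let ?c = "complex_of_real (cosh (- \<tau> / 2))" and ?d = "complex_of_real (sinh (- \<tau> / 2))"
  have "P * X * P = P * (X * P)" using P X by (simp add: assoc_mult_mat[of _ N N])
  also have "\<dots> = (P * P) * X" using P X by (simp add: comm assoc_mult_mat[of _ N N])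
  finally have PXP: "P * X * P = X" using PP X by simp
  have "cosh \<tau> = cosh (\<tau>/2) ^ 2 + sinh (\<tau>/2) ^ 2" "sinh \<tau> = 2 * sinh (\<tau>/2) * cosh (\<tau>/2)"
    using cosh_double[of "\<tau>/2"] sinh_double[of "\<tau>/2"] by simp_all
  then show ?thesis
    unfolding chan_def Let_def mat_exp_smult_involution[OF P PP] affine_sandwich[OF P X] PXP comm[symmetric]
    using P X by (intro eq_matI) (auto simp: algebra_simps power2_eq_square)
qed

lemma chan_anticommuting:
  assumes P: "P \<in> carrier_mat N N" and PP: "P * P = 1\<^sub>m N" and X: "X \<in> carrier_mat N N"
    and anti: "P * X = - (X * P)"
  shows "chan \<tau> P X = X"
proof -
  have XP: "X * P = - (P * X)" using anti P X by simp
  have "P * X * P = P * (X * P)" using P X by (simp add: assoc_mult_mat[of _ N N])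
  also have "\<dots> = - ((P * P) * X)" using P X by (simp add: XP assoc_mult_mat[of _ N N])
  finally have PXP: "P * X * P = - X" using PP X by simp
  have "complex_of_real (cosh (\<tau>/2)) * complex_of_real (cosh (\<tau>/2))
      - complex_of_real (sinh (\<tau>/2)) * complex_of_real (sinh (\<tau>/2)) = 1"
    using arg_cong[OF hyperbolic_pythagoras[of "\<tau>/2"], of complex_of_real] by (simp add: power2_eq_square)
  then show ?thesis
    unfolding chan_def Let_def mat_exp_smult_involution[OF P PP] affine_sandwich[OF P X] PXP XP
    using P X by (intro eq_matI) (auto simp: algebra_simps)
qed

lemma mat_exp_carrier: "M \<in> carrier_mat N N \<Longrightarrow> mat_exp M \<in> carrier_mat N N"
  by (simp add: mat_exp_def)

lemma chan_carrier:
  "P \<in> carrier_mat N N \<Longrightarrow> X \<in> carrier_mat N N \<Longrightarrow> chan \<tau> P X \<in> carrier_mat N N"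
  using mat_exp_carrier[of "complex_of_real (- \<tau> / 2) \<cdot>\<^sub>m P" N] by (simp add: chan_def Let_def)

lemma chan_smult:
  assumes P: "P \<in> carrier_mat N N" and X: "X \<in> carrier_mat N N"
  shows "chan \<tau> P (a \<cdot>\<^sub>m X) = a \<cdot>\<^sub>m chan \<tau> P X"
proof -
  let ?E = "mat_exp (complex_of_real (- \<tau> / 2) \<cdot>\<^sub>m P)"
  have "?E \<in> carrier_mat N N" using P by (simp add: mat_exp_carrier)
  then show ?thesis
    using X by (simp add: chan_def Let_def mult_smult_distrib[of _ N N] mult_smult_assoc_mat[of _ N N])
qed

text \<open>Matrices of varying dimensions share one type without a common zero, so finite sums of
  \<open>N \<times> N\<close> matrices are taken entrywise.\<close>
definition mat_sum :: "nat \<Rightarrow> 'b set \<Rightarrow> ('b \<Rightarrow> 'a::comm_monoid_add mat) \<Rightarrow> 'a mat" where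
  "mat_sum N S F = mat N N (\<lambda>(i,j). \<Sum>x\<in>S. F x $$ (i,j))"

lemma mat_sum_dim [simp]: "dim_row (mat_sum N S F) = N" "dim_col (mat_sum N S F) = N"
  by (simp_all add: mat_sum_def)

lemma mat_sum_carrier [simp]: "mat_sum N S F \<in> carrier_mat N N"
  by (simp add: carrier_matI)

lemma index_mat_sum [simp]: "i < N \<Longrightarrow> j < N \<Longrightarrow> mat_sum N S F $$ (i,j) = (\<Sum>x\<in>S. F x $$ (i,j))"
  by (simp add: mat_sum_def)

lemma mat_sum_singleton: "F x \<in> carrier_mat N N \<Longrightarrow> mat_sum N {x} F = F x"
  by (intro eq_matI) auto

lemma mult_mat_sum_left:
  assumes A: "A \<in> carrier_mat N N" and F: "\<And>x. x \<in> S \<Longrightarrow> F x \<in> carrier_mat N N"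
  shows "A * mat_sum N S F = mat_sum N S (\<lambda>x. A * F x :: 'a::comm_semiring_0 mat)"
proof (rule eq_matI)
  fix i j assume "i < dim_row (mat_sum N S (\<lambda>x. A * F x))" "j < dim_col (mat_sum N S (\<lambda>x. A * F x))"
  then have i: "i < N" and j: "j < N" by auto
  have "(A * mat_sum N S F) $$ (i,j) = (\<Sum>k<N. A $$ (i,k) * mat_sum N S F $$ (k,j))"
    using A i j by (intro index_mult_mat_sum[of _ N N _ N]) auto
  also have "\<dots> = (\<Sum>k<N. \<Sum>x\<in>S. A $$ (i,k) * F x $$ (k,j))"
    using j by (simp add: sum_distrib_left)
  also have "\<dots> = (\<Sum>x\<in>S. (A * F x) $$ (i,j))"
    using A F i j by (subst sum.swap) (intro sum.cong refl index_mult_mat_sum[of _ N N _ N, symmetric]; auto)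
  finally show "(A * mat_sum N S F) $$ (i,j) = mat_sum N S (\<lambda>x. A * F x) $$ (i,j)" using i j by simp
qed (use A in auto)

lemma mult_mat_sum_right:
  assumes A: "A \<in> carrier_mat N N" and F: "\<And>x. x \<in> S \<Longrightarrow> F x \<in> carrier_mat N N"
  shows "mat_sum N S F * A = mat_sum N S (\<lambda>x. F x * A :: 'a::comm_semiring_0 mat)"
proof (rule eq_matI)
  fix i j assume "i < dim_row (mat_sum N S (\<lambda>x. F x * A))" "j < dim_col (mat_sum N S (\<lambda>x. F x * A))"
  then have i: "i < N" and j: "j < N" by auto
  have "(mat_sum N S F * A) $$ (i,j) = (\<Sum>k<N. mat_sum N S F $$ (i,k) * A $$ (k,j))"
    using A i j by (intro index_mult_mat_sum[of _ N N _ N]) auto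
  also have "\<dots> = (\<Sum>k<N. \<Sum>x\<in>S. F x $$ (i,k) * A $$ (k,j))"
    using i by (simp add: sum_distrib_right)
  also have "\<dots> = (\<Sum>x\<in>S. (F x * A) $$ (i,j))"
    using A F i j by (subst sum.swap) (intro sum.cong refl index_mult_mat_sum[of _ N N _ N, symmetric]; auto)
  finally show "(mat_sum N S F * A) $$ (i,j) = mat_sum N S (\<lambda>x. F x * A) $$ (i,j)" using i j by simp
qed (use A in auto)

lemma chan_mat_sum:
  assumes P: "P \<in> carrier_mat N N" and F: "\<And>x. x \<in> S \<Longrightarrow> F x \<in> carrier_mat N N"
  shows "chan \<tau> P (mat_sum N S F) = mat_sum N S (\<lambda>x. chan \<tau> P (F x))"
proof -
  let ?E = "mat_exp (complex_of_real (- \<tau> / 2) \<cdot>\<^sub>m P)"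
  have E: "?E \<in> carrier_mat N N" using P by (simp add: mat_exp_carrier)
  have "?E * mat_sum N S F * ?E = mat_sum N S (\<lambda>x. ?E * F x) * ?E"
    by (rule arg_cong[where f = "\<lambda>A. A * ?E"], rule mult_mat_sum_left[OF E F])
  also have "\<dots> = mat_sum N S (\<lambda>x. ?E * F x * ?E)"
    using E F by (intro mult_mat_sum_right) auto
  finally show ?thesis by (simp add: chan_def Let_def)
qed

section \<open>Pauli paths\<close>

lemma finite_pauli_strings: "finite {Q :: pauli list. length Q = n}"
proof -
  have "(UNIV :: pauli set) = {PI, PX, PY, PZ}"
    using pauli.exhaust by auto
  then have "finite (UNIV :: pauli set)" by (metis finite.emptyI finite.insertI)
  then show ?thesis
    using finite_lists_length_eq[of "UNIV :: pauli set" n] by simp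
qed

lemma finite_successors: "finite (successors n P Q)"
  unfolding successors_def by (rule finite_subset[OF _ finite_pauli_strings[of n]]) auto

lemma successors_if_commutes:
  assumes "commutes P (pauli_mat Q)" and nonid: "nonid_step P Q W" and "length W = n" "length Q = n"
  shows "successors n P Q = {Q, W}"
proof (intro Set.set_eqI iffI)
  fix Q' assume "Q' \<in> successors n P Q"
  then have "length Q' = n" "Q' = Q \<or> nonid_step P Q Q'"
    by (auto simp: successors_def valid_step_def)
  then show "Q' \<in> {Q, W}" using nonid_step_unique[OF nonid] assms(3) by auto
next
  fix Q' assume "Q' \<in> {Q, W}"
  then show "Q' \<in> successors n P Q"
    using assms by (auto simp: successors_def valid_step_def)
qed

lemma successors_cases [consumes 2]:
  fixes \<tau> :: real
  assumes gate: "signed_pauli_gate n sp" and len: "length Q = n"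
  obtains (anticommuting)
      "successors n (signed_pauli_mat sp) Q = {Q}" "step_factor \<tau> (signed_pauli_mat sp) Q Q = 1"
      "\<not> nonid_step (signed_pauli_mat sp) Q Q"
      "chan \<tau> (signed_pauli_mat sp) (pauli_mat Q) = pauli_mat Q"
  | (commuting) s W where "s = 1 \<or> s = -1" "length W = n" "W \<noteq> Q"
      "successors n (signed_pauli_mat sp) Q = {Q, W}"
      "step_factor \<tau> (signed_pauli_mat sp) Q Q = cosh \<tau>"
      "step_factor \<tau> (signed_pauli_mat sp) Q W = - s * sinh \<tau>"
      "nonid_step (signed_pauli_mat sp) Q W" "\<not> nonid_step (signed_pauli_mat sp) Q Q"
      "chan \<tau> (signed_pauli_mat sp) (pauli_mat Q) =
        complex_of_real (cosh \<tau>) \<cdot>\<^sub>m pauli_mat Q + complex_of_real (- s * sinh \<tau>) \<cdot>\<^sub>m pauli_mat W"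
proof -
  have Pc: "signed_pauli_mat sp \<in> carrier_mat (2^n) (2^n)"
    and PP: "signed_pauli_mat sp * signed_pauli_mat sp = 1\<^sub>m (2^n)"
    using gate signed_pauli_mat_carrier[of sp] signed_pauli_mat_square[of sp]
    by (auto simp: signed_pauli_gate_def)
  have Qc: "pauli_mat Q \<in> carrier_mat (2^n) (2^n)" using len pauli_mat_carrier[of Q] by simp
  have not_self: "\<not> nonid_step (signed_pauli_mat sp) Q Q"
    by (rule not_nonid_step_self[OF gate len])
  consider "anticommutes (signed_pauli_mat sp) (pauli_mat Q)" "\<not> commutes (signed_pauli_mat sp) (pauli_mat Q)"
    | "commutes (signed_pauli_mat sp) (pauli_mat Q)"
    using signed_pauli_commutes_or_anticommutes[OF gate len] by blast
  then show ?thesis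
  proof cases
    case 1
    have "successors n (signed_pauli_mat sp) Q = {Q}"
      using 1 len by (auto simp: successors_def valid_step_def nonid_step_def)
    moreover have "step_factor \<tau> (signed_pauli_mat sp) Q Q = 1"
      using 1 not_self by (simp add: step_factor_def)
    moreover have "chan \<tau> (signed_pauli_mat sp) (pauli_mat Q) = pauli_mat Q"
      using chan_anticommuting[OF Pc PP Qc] 1 by (simp add: anticommutes_def)
    ultimately show ?thesis using not_self anticommuting by blast
  next
    case 2
    define W where "W = map2 pauli_mult (snd sp) Q"
    have nonid: "nonid_step (signed_pauli_mat sp) Q W"
      unfolding W_def by (rule nonid_step_if_commutes[OF gate len 2])
    then obtain s :: real where s: "s = 1 \<or> s = -1"
      and PQ: "signed_pauli_mat sp * pauli_mat Q = complex_of_real s \<cdot>\<^sub>m pauli_mat W"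
      unfolding nonid_step_def by blast
    have lenW: "length W = n" using gate len by (simp add: W_def signed_pauli_gate_def)
    have "successors n (signed_pauli_mat sp) Q = {Q, W}"
      using successors_if_commutes[OF 2 nonid lenW len] .
    moreover have "step_factor \<tau> (signed_pauli_mat sp) Q Q = cosh \<tau>"
      using 2 not_self by (simp add: step_factor_def)
    moreover have "step_factor \<tau> (signed_pauli_mat sp) Q W = - s * sinh \<tau>"
      by (rule step_factor_nonid[OF nonid s PQ])
    moreover have "chan \<tau> (signed_pauli_mat sp) (pauli_mat Q) =
        complex_of_real (cosh \<tau>) \<cdot>\<^sub>m pauli_mat Q + complex_of_real (- s * sinh \<tau>) \<cdot>\<^sub>m pauli_mat W"
      unfolding chan_commuting[OF Pc PP Qc 2[unfolded commutes_def]] PQ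
      by (simp add: smult_smult_mat mult.commute)
    moreover have "W \<noteq> Q" using nonid not_self by blast
    ultimately show ?thesis using s lenW nonid not_self commuting by blast
  qed
qed

lemma chan_pauli_mat_eq_successor_sum:
  assumes gate: "signed_pauli_gate n sp" and len: "length Q = n" and "i < 2^n" "j < 2^n"
  shows "chan \<tau> (signed_pauli_mat sp) (pauli_mat Q) $$ (i,j) =
    (\<Sum>Q'\<in>successors n (signed_pauli_mat sp) Q.
      complex_of_real (step_factor \<tau> (signed_pauli_mat sp) Q Q') * pauli_mat Q' $$ (i,j))"
  using gate len
proof (cases rule: successors_cases[where \<tau> = \<tau>])
  case anticommuting
  then show ?thesis by simp
next
  case (commuting s W)
  then show ?thesis using len \<open>i < 2^n\<close> \<open>j < 2^n\<close> by simp
qed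

lemma sinh_le_mult_exp: "sinh t \<le> t * exp (t::real)"
proof -
  have "exp t * (1 + (- 2 * t)) \<le> exp t * exp (- 2 * t)"
    by (intro mult_left_mono exp_ge_add_one_self) simp
  then show ?thesis by (simp add: sinh_def algebra_simps flip: exp_add)
qed

lemma successor_weight_le:
  assumes gate: "signed_pauli_gate n sp" and len: "length Q = n" and "0 \<le> \<tau>" "0 \<le> y"
  shows "(\<Sum>Q'\<in>successors n (signed_pauli_mat sp) Q.
      \<bar>step_factor \<tau> (signed_pauli_mat sp) Q Q'\<bar> * y ^ (if nonid_step (signed_pauli_mat sp) Q Q' then 1 else 0))
    \<le> exp \<tau> * (1 + y * \<tau>)"
  using gate len
proof (cases rule: successors_cases[where \<tau> = \<tau>])
  case anticommuting
  have "1 * 1 \<le> exp \<tau> * (1 + y * \<tau>)"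
    using \<open>0 \<le> \<tau>\<close> \<open>0 \<le> y\<close> by (intro mult_mono) auto
  then show ?thesis using anticommuting by simp
next
  case (commuting s W)
  have "cosh \<tau> + sinh \<tau> * y \<le> exp \<tau> + \<tau> * exp \<tau> * y"
    using \<open>0 \<le> \<tau>\<close> \<open>0 \<le> y\<close> sinh_le_mult_exp[of \<tau>]
    by (intro add_mono mult_right_mono) (auto simp: cosh_def)
  moreover have "\<bar>- s * sinh \<tau>\<bar> = sinh \<tau>" using commuting(1) \<open>0 \<le> \<tau>\<close> by auto
  ultimately show ?thesis using commuting by (simp add: algebra_simps)
qed

lemma pauli_paths_length: "\<gamma> \<in> pauli_paths n Ps \<Longrightarrow> length \<gamma> = Suc (length Ps)"
  by (simp add: pauli_paths_def)

lemma pauli_paths_last_length: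
  assumes "\<gamma> \<in> pauli_paths n Ps"
  shows "length (last \<gamma>) = n"
proof -
  have "\<gamma> \<noteq> []" using pauli_paths_length[OF assms] by auto
  then show ?thesis using assms by (simp add: pauli_paths_def)
qed

lemma pauli_paths_Nil: "pauli_paths n [] = {[replicate n PI]}"
proof (intro Set.set_eqI iffI)
  fix \<gamma> assume "\<gamma> \<in> pauli_paths n []"
  then have "length \<gamma> = 1" "\<gamma> ! 0 = replicate n PI" by (simp_all add: pauli_paths_def)
  then show "\<gamma> \<in> {[replicate n PI]}" by (cases \<gamma>) auto
qed (simp add: pauli_paths_def)

lemma finite_pauli_paths: "finite (pauli_paths n Ps)"
proof (rule finite_subset)
  show "pauli_paths n Ps \<subseteq> {\<gamma>. set \<gamma> \<subseteq> {Q. length Q = n} \<and> length \<gamma> = Suc (length Ps)}"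
    by (auto simp: pauli_paths_def)
  show "finite {\<gamma>. set \<gamma> \<subseteq> {Q :: pauli list. length Q = n} \<and> length \<gamma> = Suc (length Ps)}"
    by (rule finite_lists_length_eq[OF finite_pauli_strings])
qed

lemma nth_snoc_path:
  assumes "length \<gamma> = Suc (length Ps)"
  shows "(Ps @ [sp]) ! length Ps = sp" "(\<gamma> @ [Q]) ! length Ps = last \<gamma>"
    "(\<gamma> @ [Q]) ! Suc (length Ps) = Q"
proof -
  have "\<gamma> \<noteq> []" using assms by auto
  then show "(\<gamma> @ [Q]) ! length Ps = last \<gamma>"
    using assms by (simp add: nth_append last_conv_nth)
qed (use assms in \<open>simp_all add: nth_append\<close>)

lemma pauli_paths_snoc_iff:
  assumes len: "length \<gamma> = Suc (length Ps)"
  shows "\<gamma> @ [Q] \<in> pauli_paths n (Ps @ [sp]) \<longleftrightarrow>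
     \<gamma> \<in> pauli_paths n Ps \<and> Q \<in> successors n (signed_pauli_mat sp) (last \<gamma>)"
proof -
  have "{1..length (Ps @ [sp])} = insert (Suc (length Ps)) {1..length Ps}" by auto
  then have "(\<forall>t\<in>{1..length (Ps @ [sp])}.
        valid_step (signed_pauli_mat ((Ps @ [sp]) ! (t - 1))) ((\<gamma> @ [Q]) ! (t - 1)) ((\<gamma> @ [Q]) ! t))
     \<longleftrightarrow> (\<forall>t\<in>{1..length Ps}. valid_step (signed_pauli_mat (Ps ! (t - 1))) (\<gamma> ! (t - 1)) (\<gamma> ! t))
         \<and> valid_step (signed_pauli_mat sp) (last \<gamma>) Q"
    using nth_snoc_path[OF len] len by (auto simp: nth_append)
  moreover have "(\<gamma> @ [Q]) ! 0 = \<gamma> ! 0" using len by (simp add: nth_append)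
  ultimately show ?thesis
    unfolding pauli_paths_def successors_def using len by auto
qed

lemma pauli_paths_snoc:
  "pauli_paths n (Ps @ [sp]) =
     (\<lambda>(\<gamma>, Q). \<gamma> @ [Q]) ` (SIGMA \<gamma>:pauli_paths n Ps. successors n (signed_pauli_mat sp) (last \<gamma>))"
proof (intro Set.set_eqI iffI)
  fix \<gamma>' assume \<gamma>': "\<gamma>' \<in> pauli_paths n (Ps @ [sp])"
  then have "\<gamma>' = butlast \<gamma>' @ [last \<gamma>']" "length (butlast \<gamma>') = Suc (length Ps)"
    using pauli_paths_length[OF \<gamma>'] by (auto simp flip: length_0_conv)
  then show "\<gamma>' \<in> (\<lambda>(\<gamma>, Q). \<gamma> @ [Q]) ` (SIGMA \<gamma>:pauli_paths n Ps. successors n (signed_pauli_mat sp) (last \<gamma>))"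
    using \<gamma>' pauli_paths_snoc_iff[of "butlast \<gamma>'" Ps "last \<gamma>'" n sp]
    by (intro image_eqI[of _ _ "(butlast \<gamma>', last \<gamma>')"]) auto
qed (auto simp: pauli_paths_snoc_iff pauli_paths_length)

lemma sum_pauli_paths_snoc:
  "(\<Sum>\<gamma>'\<in>pauli_paths n (Ps @ [sp]). f \<gamma>') =
     (\<Sum>\<gamma>\<in>pauli_paths n Ps. \<Sum>Q\<in>successors n (signed_pauli_mat sp) (last \<gamma>). f (\<gamma> @ [Q]))"
proof -
  let ?S = "SIGMA \<gamma>:pauli_paths n Ps. successors n (signed_pauli_mat sp) (last \<gamma>)"
  have inj: "inj_on (\<lambda>(\<gamma>, Q). \<gamma> @ [Q]) ?S" by (auto simp: inj_on_def)
  have "(\<Sum>\<gamma>'\<in>pauli_paths n (Ps @ [sp]). f \<gamma>') = (\<Sum>(\<gamma>, Q)\<in>?S. f (\<gamma> @ [Q]))"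
    unfolding pauli_paths_snoc sum.reindex[OF inj] by (simp add: case_prod_beta)
  also have "\<dots> = (\<Sum>\<gamma>\<in>pauli_paths n Ps. \<Sum>Q\<in>successors n (signed_pauli_mat sp) (last \<gamma>). f (\<gamma> @ [Q]))"
    by (rule sum.Sigma[symmetric]) (auto simp: finite_pauli_paths finite_successors)
  finally show ?thesis .
qed

lemma path_coef_snoc:
  assumes len: "length \<gamma> = Suc (length Ps)"
  shows "path_coef \<tau> (Ps @ [sp]) (\<gamma> @ [Q]) =
    path_coef \<tau> Ps \<gamma> * step_factor \<tau> (signed_pauli_mat sp) (last \<gamma>) Q"
proof -
  have "path_coef \<tau> (Ps @ [sp]) (\<gamma> @ [Q]) = (\<Prod>t\<in>{1..length Ps}.
      step_factor \<tau> (signed_pauli_mat ((Ps @ [sp]) ! (t - 1))) ((\<gamma> @ [Q]) ! (t - 1)) ((\<gamma> @ [Q]) ! t))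
      * step_factor \<tau> (signed_pauli_mat sp) (last \<gamma>) Q"
    using nth_snoc_path[OF len] by (simp add: path_coef_def prod.cl_ivl_Suc)
  also have "\<dots> = path_coef \<tau> Ps \<gamma> * step_factor \<tau> (signed_pauli_mat sp) (last \<gamma>) Q"
    unfolding path_coef_def using len by (intro arg_cong2[where f = "(*)"] prod.cong refl) (auto simp: nth_append)
  finally show ?thesis .
qed

lemma path_r_snoc:
  assumes len: "length \<gamma> = Suc (length Ps)"
  shows "path_r (Ps @ [sp]) (\<gamma> @ [Q]) =
    path_r Ps \<gamma> + (if nonid_step (signed_pauli_mat sp) (last \<gamma>) Q then 1 else 0)"
proof -
  let ?f = "\<lambda>t. nonid_step (signed_pauli_mat ((Ps @ [sp]) ! (t - 1))) ((\<gamma> @ [Q]) ! (t - 1)) ((\<gamma> @ [Q]) ! t)"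
  have "{t\<in>{1..length Ps}. ?f t} = {t\<in>{1..length Ps}. nonid_step (signed_pauli_mat (Ps ! (t - 1))) (\<gamma> ! (t - 1)) (\<gamma> ! t)}"
    using len by (auto simp: nth_append)
  moreover have "{t\<in>{1..Suc (length Ps)}. ?f t} =
      {t\<in>{1..length Ps}. ?f t} \<union> (if ?f (Suc (length Ps)) then {Suc (length Ps)} else {})"
    by (auto simp: le_Suc_eq)
  ultimately show ?thesis
    using nth_snoc_path[OF len] by (simp add: path_r_def card_Un_disjoint)
qed

lemma chan_path_term:
  assumes gate: "signed_pauli_gate n sp" and \<gamma>: "\<gamma> \<in> pauli_paths n Ps" and i: "i < 2^n" and j: "j < 2^n"
  shows "chan \<tau> (signed_pauli_mat sp) (complex_of_real (path_coef \<tau> Ps \<gamma>) \<cdot>\<^sub>m pauli_mat (last \<gamma>)) $$ (i,j) =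
    (\<Sum>Q\<in>successors n (signed_pauli_mat sp) (last \<gamma>).
      (complex_of_real (path_coef \<tau> (Ps @ [sp]) (\<gamma> @ [Q])) \<cdot>\<^sub>m pauli_mat (last (\<gamma> @ [Q]))) $$ (i,j))"
proof -
  let ?P = "signed_pauli_mat sp"
  have Pc: "?P \<in> carrier_mat (2^n) (2^n)"
    using gate signed_pauli_mat_carrier[of sp] by (simp add: signed_pauli_gate_def)
  have Qc: "pauli_mat (last \<gamma>) \<in> carrier_mat (2^n) (2^n)"
    using pauli_paths_last_length[OF \<gamma>] pauli_mat_carrier[of "last \<gamma>"] by simp
  have "chan \<tau> ?P (complex_of_real (path_coef \<tau> Ps \<gamma>) \<cdot>\<^sub>m pauli_mat (last \<gamma>)) $$ (i,j)
      = complex_of_real (path_coef \<tau> Ps \<gamma>) * chan \<tau> ?P (pauli_mat (last \<gamma>)) $$ (i,j)"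
    unfolding chan_smult[OF Pc Qc] using chan_carrier[OF Pc Qc, of \<tau>] i j by simp
  also have "\<dots> = (\<Sum>Q\<in>successors n ?P (last \<gamma>). complex_of_real (path_coef \<tau> Ps \<gamma>)
      * (complex_of_real (step_factor \<tau> ?P (last \<gamma>) Q) * pauli_mat Q $$ (i,j)))"
    by (simp add: chan_pauli_mat_eq_successor_sum[OF gate pauli_paths_last_length[OF \<gamma>] i j]
        sum_distrib_left)
  also have "\<dots> = (\<Sum>Q\<in>successors n ?P (last \<gamma>).
      (complex_of_real (path_coef \<tau> (Ps @ [sp]) (\<gamma> @ [Q])) \<cdot>\<^sub>m pauli_mat (last (\<gamma> @ [Q]))) $$ (i,j))"
    using i j by (intro sum.cong refl)
      (auto simp: successors_def path_coef_snoc pauli_paths_length[OF \<gamma>])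
  finally show ?thesis .
qed

theorem A_op_path_expansion:
  assumes "\<forall>sp\<in>set Ps. signed_pauli_gate n sp"
  shows "A_op n \<tau> Ps = mat_sum (2^n) (pauli_paths n Ps)
    (\<lambda>\<gamma>. complex_of_real (path_coef \<tau> Ps \<gamma>) \<cdot>\<^sub>m pauli_mat (last \<gamma>))"
  using assms
proof (induction Ps rule: rev_induct)
  case Nil
  show ?case
    by (simp add: A_op_def pauli_paths_Nil path_coef_def pauli_mat_replicate_PI mat_sum_singleton)
next
  case (snoc sp Ps)
  let ?N = "2^n :: nat" and ?P = "signed_pauli_mat sp" and ?G = "pauli_paths n Ps"
  let ?F = "\<lambda>Ps \<gamma>. complex_of_real (path_coef \<tau> Ps \<gamma>) \<cdot>\<^sub>m pauli_mat (last \<gamma>)"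
  have gate: "signed_pauli_gate n sp" using snoc.prems by simp
  have Pc: "?P \<in> carrier_mat ?N ?N"
    using gate signed_pauli_mat_carrier[of sp] by (simp add: signed_pauli_gate_def)
  have Qc: "pauli_mat (last \<gamma>) \<in> carrier_mat ?N ?N" if "\<gamma> \<in> ?G" for \<gamma>
    using pauli_paths_last_length[OF that] pauli_mat_carrier[of "last \<gamma>"] by simp
  have "A_op n \<tau> (Ps @ [sp]) = chan \<tau> ?P (mat_sum ?N ?G (?F Ps))"
    using snoc by (simp add: A_op_def)
  also have "\<dots> = mat_sum ?N ?G (\<lambda>\<gamma>. chan \<tau> ?P (?F Ps \<gamma>))"
    using Qc by (intro chan_mat_sum[OF Pc]) simp
  also have "\<dots> = mat_sum ?N (pauli_paths n (Ps @ [sp])) (?F (Ps @ [sp]))"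
  proof (rule eq_matI)
    fix i j assume "i < dim_row (mat_sum ?N (pauli_paths n (Ps @ [sp])) (?F (Ps @ [sp])))"
      "j < dim_col (mat_sum ?N (pauli_paths n (Ps @ [sp])) (?F (Ps @ [sp])))"
    then have i: "i < ?N" and j: "j < ?N" by auto
    have "(\<Sum>\<gamma>\<in>?G. chan \<tau> ?P (?F Ps \<gamma>) $$ (i,j))
        = (\<Sum>\<gamma>\<in>?G. \<Sum>Q\<in>successors n ?P (last \<gamma>). ?F (Ps @ [sp]) (\<gamma> @ [Q]) $$ (i,j))"
      by (rule sum.cong[OF refl], rule chan_path_term[OF gate _ i j])
    also have "\<dots> = (\<Sum>\<gamma>'\<in>pauli_paths n (Ps @ [sp]). ?F (Ps @ [sp]) \<gamma>' $$ (i,j))"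
      by (rule sum_pauli_paths_snoc[symmetric])
    finally show "mat_sum ?N ?G (\<lambda>\<gamma>. chan \<tau> ?P (?F Ps \<gamma>)) $$ (i,j) =
        mat_sum ?N (pauli_paths n (Ps @ [sp])) (?F (Ps @ [sp])) $$ (i,j)"
      using i j by simp
  qed auto
  finally show ?case .
qed

lemma weighted_path_coef_sum_le:
  assumes "\<forall>sp\<in>set Ps. signed_pauli_gate n sp" and "0 \<le> \<tau>" and "0 \<le> y"
  shows "(\<Sum>\<gamma>\<in>pauli_paths n Ps. \<bar>path_coef \<tau> Ps \<gamma>\<bar> * y ^ path_r Ps \<gamma>)
    \<le> (exp \<tau> * (1 + y * \<tau>)) ^ length Ps"
  using assms(1)
proof (induction Ps rule: rev_induct)
  case Nil
  show ?case by (simp add: pauli_paths_Nil path_coef_def path_r_def)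
next
  case (snoc sp Ps)
  let ?P = "signed_pauli_mat sp" and ?G = "pauli_paths n Ps" and ?B = "exp \<tau> * (1 + y * \<tau>)"
  let ?w = "\<lambda>\<gamma>. \<bar>path_coef \<tau> Ps \<gamma>\<bar> * y ^ path_r Ps \<gamma>"
  have gate: "signed_pauli_gate n sp" using snoc.prems by simp
  have "(\<Sum>\<gamma>'\<in>pauli_paths n (Ps @ [sp]). \<bar>path_coef \<tau> (Ps @ [sp]) \<gamma>'\<bar> * y ^ path_r (Ps @ [sp]) \<gamma>')
      = (\<Sum>\<gamma>\<in>?G. ?w \<gamma> * (\<Sum>Q\<in>successors n ?P (last \<gamma>).
          \<bar>step_factor \<tau> ?P (last \<gamma>) Q\<bar> * y ^ (if nonid_step ?P (last \<gamma>) Q then 1 else 0)))"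
    by (simp add: sum_pauli_paths_snoc path_coef_snoc path_r_snoc pauli_paths_length
        abs_mult power_add sum_distrib_left mult_ac)
  also have "\<dots> \<le> (\<Sum>\<gamma>\<in>?G. ?w \<gamma> * ?B)"
    using successor_weight_le[OF gate pauli_paths_last_length assms(2,3)] assms(3)
    by (intro sum_mono mult_left_mono) auto
  also have "\<dots> \<le> ?B ^ length Ps * ?B"
    using snoc.IH snoc.prems assms(2,3) by (simp add: sum_distrib_right[symmetric] mult_right_mono)
  finally show ?case by (simp add: mult.commute)
qed

section \<open>Trace norm and Frobenius norm\<close>

lemma mat_trace_mult_commute:
  assumes X: "X \<in> carrier_mat n m" and Y: "Y \<in> carrier_mat m n"
  shows "mat_trace (X * Y) = mat_trace (Y * (X :: 'a::comm_semiring_0 mat))"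
proof -
  have "mat_trace (X * Y) = (\<Sum>i<n. \<Sum>k<m. X $$ (i,k) * Y $$ (k,i))"
    unfolding mat_trace_def using X Y by (intro sum.cong refl index_mult_mat_sum[OF X Y]) auto
  also have "\<dots> = (\<Sum>k<m. \<Sum>i<n. Y $$ (k,i) * X $$ (i,k))"
    by (subst sum.swap) (simp add: mult.commute)
  also have "\<dots> = mat_trace (Y * X)"
    unfolding mat_trace_def using X Y by (intro sum.cong refl index_mult_mat_sum[OF Y X, symmetric]) auto
  finally show ?thesis .
qed

lemma mat_trace_similar:
  assumes "similar_mat A B"
  shows "mat_trace A = mat_trace (B :: 'a::comm_ring_1 mat)"
proof -
  obtain n P Q where c: "{A, B, P, Q} \<subseteq> carrier_mat n n"
    and QP: "Q * P = 1\<^sub>m n" and A: "A = P * B * Q"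
    using similar_matD[OF assms] by blast
  then have P: "P \<in> carrier_mat n n" and B: "B \<in> carrier_mat n n" and Q: "Q \<in> carrier_mat n n" by auto
  have "mat_trace A = mat_trace (P * (B * Q))" using A P B Q by (simp add: assoc_mult_mat[of _ n n])
  also have "\<dots> = mat_trace (B * Q * P)" using P B Q by (intro mat_trace_mult_commute) auto
  also have "\<dots> = mat_trace B" using P B Q QP by (simp add: assoc_mult_mat[of _ n n])
  finally show ?thesis .
qed

lemma mat_adjoint_carrier: "M \<in> carrier_mat N N \<Longrightarrow> mat_adjoint M \<in> carrier_mat N N"
  by (rule carrier_matI) (auto simp: mat_adjoint_def)

lemma index_mat_adjoint:
  "M \<in> carrier_mat N N \<Longrightarrow> i < N \<Longrightarrow> j < N \<Longrightarrow> mat_adjoint M $$ (i,j) = cnj (M $$ (j,i))"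
  by (simp add: mat_adjoint_def mat_of_rows_def)

lemma cnj_mult_self: "cnj z * z = complex_of_real ((cmod z)\<^sup>2)"
  using complex_norm_square[of z] by (simp add: mult.commute)

lemma quadratic_form_adjoint_mult:
  assumes M: "M \<in> carrier_mat N N" and v: "v \<in> carrier_vec N"
  shows "(\<Sum>i<N. cnj (v $ i) * ((mat_adjoint M * M) *\<^sub>v v) $ i) =
    complex_of_real (\<Sum>k<N. (cmod ((M *\<^sub>v v) $ k))\<^sup>2)"
proof -
  define w where "w = M *\<^sub>v v"
  have w: "w \<in> carrier_vec N" using M v by (simp add: w_def)
  have "(mat_adjoint M * M) *\<^sub>v v = mat_adjoint M *\<^sub>v w"
    using mat_adjoint_carrier[OF M] M v by (simp add: w_def assoc_mult_mat_vec[of _ N N _ N])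
  then have "((mat_adjoint M * M) *\<^sub>v v) $ i = (\<Sum>k<N. cnj (M $$ (k,i)) * w $ k)" if "i < N" for i
    using that mat_adjoint_carrier[OF M] w
    by (simp add: scalar_prod_def atLeast0LessThan index_mat_adjoint[OF M])
  then have "(\<Sum>i<N. cnj (v $ i) * ((mat_adjoint M * M) *\<^sub>v v) $ i)
      = (\<Sum>i<N. \<Sum>k<N. cnj (v $ i) * (cnj (M $$ (k,i)) * w $ k))"
    by (simp add: sum_distrib_left)
  also have "\<dots> = (\<Sum>k<N. cnj (w $ k) * w $ k)"
  proof (subst sum.swap, intro sum.cong refl)
    fix k assume "k \<in> {..<N}"
    then have "cnj (w $ k) = (\<Sum>i<N. cnj (M $$ (k,i)) * cnj (v $ i))"
      using M v by (simp add: w_def scalar_prod_def atLeast0LessThan)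
    then show "(\<Sum>i<N. cnj (v $ i) * (cnj (M $$ (k,i)) * w $ k)) = cnj (w $ k) * w $ k"
      by (simp add: sum_distrib_left mult_ac)
  qed
  also have "\<dots> = (\<Sum>k<N. complex_of_real ((cmod (w $ k))\<^sup>2))"
    by (simp only: cnj_mult_self)
  finally show ?thesis by (simp add: w_def)
qed

lemma eigenvalue_adjoint_mult_nonneg:
  assumes M: "M \<in> carrier_mat N N" and ev: "eigenvector (mat_adjoint M * M) v \<mu>"
  shows "0 \<le> Re \<mu>"
proof -
  have A: "mat_adjoint M * M \<in> carrier_mat N N" using mat_adjoint_carrier[OF M] M by simp
  from ev have v: "v \<in> carrier_vec N" and "v \<noteq> 0\<^sub>v N" and Av: "(mat_adjoint M * M) *\<^sub>v v = \<mu> \<cdot>\<^sub>v v"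
    unfolding eigenvector_def using A by auto
  then obtain i where "i < N" "v $ i \<noteq> 0" by (metis carrier_vecD eq_vecI index_zero_vec)
  then have pos: "0 < (\<Sum>i<N. (cmod (v $ i))\<^sup>2)"
    by (intro sum_pos2[of _ i]) auto
  have "complex_of_real (\<Sum>k<N. (cmod ((M *\<^sub>v v) $ k))\<^sup>2)
      = (\<Sum>i<N. cnj (v $ i) * ((mat_adjoint M * M) *\<^sub>v v) $ i)"
    by (rule quadratic_form_adjoint_mult[OF M v, symmetric])
  also have "\<dots> = (\<Sum>i<N. \<mu> * (cnj (v $ i) * v $ i))"
    unfolding Av using v by (intro sum.cong refl) auto
  also have "\<dots> = \<mu> * complex_of_real (\<Sum>i<N. (cmod (v $ i))\<^sup>2)"
    by (simp only: sum_distrib_left cnj_mult_self of_real_sum)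
  finally have "complex_of_real (\<Sum>k<N. (cmod ((M *\<^sub>v v) $ k))\<^sup>2)
      = \<mu> * complex_of_real (\<Sum>i<N. (cmod (v $ i))\<^sup>2)" .
  from arg_cong[OF this, of Re]
  have "Re \<mu> * (\<Sum>i<N. (cmod (v $ i))\<^sup>2) = (\<Sum>k<N. (cmod ((M *\<^sub>v v) $ k))\<^sup>2)"
    by simp
  moreover have "0 \<le> (\<Sum>k<N. (cmod ((M *\<^sub>v v) $ k))\<^sup>2)" by (intro sum_nonneg) auto
  ultimately show ?thesis using pos by (metis not_le mult_neg_pos)
qed

lemma proots_prod_linear_factors: "proots (\<Prod>a\<leftarrow>as. [:- a, 1:]) = mset (as :: 'a::idom list)"
proof (induction as)
  case (Cons a as)
  have "(\<Prod>a\<leftarrow>as. [:- a, 1:]) \<noteq> 0" by (auto simp: prod_list_zero_iff)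
  then show ?case using Cons by (simp add: proots_mult del: mult_pCons_left)
qed simp

text \<open>Schur triangularisation of \<open>M\<^sup>\<dagger> M\<close> puts its eigenvalues, the squared singular values, on a diagonal.\<close>
lemma trace_norm_triangular:
  assumes M: "M \<in> carrier_mat N N"
  obtains B where "similar_mat (mat_adjoint M * M) B" "B \<in> carrier_mat N N"
    "trace_norm M = (\<Sum>i<N. sqrt (Re (B $$ (i,i))))" "\<And>i. i < N \<Longrightarrow> 0 \<le> Re (B $$ (i,i))"
proof -
  let ?A = "mat_adjoint M * M"
  have A: "?A \<in> carrier_mat N N" using mat_adjoint_carrier[OF M] M by simp
  obtain as where cp: "char_poly ?A = (\<Prod>a\<leftarrow>as. [:- a, 1:])"
    using char_poly_factorized[OF A] by blast
  define B where "B = schur_upper_triangular ?A as"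
  have B: "B \<in> carrier_mat N N" and "upper_triangular B" and sim: "similar_mat ?A B"
    using schur_upper_triangular[OF A cp] unfolding B_def by auto
  then have cpB: "char_poly ?A = (\<Prod>a\<leftarrow>diag_mat B. [:- a, 1:])"
    using char_poly_similar[OF sim] char_poly_upper_triangular by simp
  have diag: "diag_mat B = map (\<lambda>i. B $$ (i,i)) [0..<N]" using B by (simp add: diag_mat_def)
  have "trace_norm M = (\<Sum>i<N. sqrt (Re (B $$ (i,i))))"
    unfolding trace_norm_def cpB proots_prod_linear_factors diag
    by (simp only: mset_map[symmetric] sum_mset_sum_list map_map interv_sum_list_conv_sum_set_nat
        set_upt atLeast0LessThan o_def)
  moreover have "0 \<le> Re (B $$ (i,i))" if "i < N" for i
  proof -
    have "poly (char_poly ?A) (B $$ (i,i)) = 0"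
      unfolding cpB using that diag by (intro linear_poly_root) auto
    then obtain v where "eigenvector ?A v (B $$ (i,i))"
      using eigenvalue_root_char_poly[OF A] unfolding eigenvalue_def by blast
    then show ?thesis by (rule eigenvalue_adjoint_mult_nonneg[OF M])
  qed
  ultimately show ?thesis using that sim B by blast
qed

lemma mat_trace_adjoint_mult:
  assumes M: "M \<in> carrier_mat N N"
  shows "mat_trace (mat_adjoint M * M) = complex_of_real (\<Sum>i<N. \<Sum>j<N. (cmod (M $$ (i,j)))\<^sup>2)"
proof -
  have "mat_trace (mat_adjoint M * M) = (\<Sum>j<N. \<Sum>i<N. cnj (M $$ (i,j)) * M $$ (i,j))"
    unfolding mat_trace_def using mat_adjoint_carrier[OF M] M
    by (intro sum.cong refl trans[OF index_mult_mat_sum[OF mat_adjoint_carrier[OF M] M]])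
       (auto simp: index_mat_adjoint[OF M])
  also have "\<dots> = (\<Sum>j<N. \<Sum>i<N. complex_of_real ((cmod (M $$ (i,j)))\<^sup>2))"
    by (simp only: cnj_mult_self)
  also have "\<dots> = complex_of_real (\<Sum>i<N. \<Sum>j<N. (cmod (M $$ (i,j)))\<^sup>2)"
    unfolding of_real_sum by (rule sum.swap)
  finally show ?thesis .
qed

lemma sum_sqrt_le_sqrt_card_sum:
  assumes "\<And>i. i < N \<Longrightarrow> 0 \<le> r i"
  shows "(\<Sum>i<N. sqrt (r i)) \<le> sqrt (real N * (\<Sum>i<N. r i))"
proof (rule real_le_rsqrt)
  have "(\<Sum>i<N. sqrt (r i))\<^sup>2 \<le> (\<Sum>i<N. (sqrt (r i))\<^sup>2) * real N"
    using sum_squared_le_sum_of_squares[of "\<lambda>i. sqrt (r i)" "{..<N}"] by simp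
  then show "(\<Sum>i<N. sqrt (r i))\<^sup>2 \<le> real N * (\<Sum>i<N. r i)"
    using assms by (simp add: mult.commute)
qed

text \<open>Cauchy-Schwarz for the singular values.\<close>
lemma trace_norm_le_frobenius:
  assumes M: "M \<in> carrier_mat N N"
  shows "trace_norm M \<le> sqrt (real N * (\<Sum>i<N. \<Sum>j<N. (cmod (M $$ (i,j)))\<^sup>2))"
proof -
  obtain B where sim: "similar_mat (mat_adjoint M * M) B" and B: "B \<in> carrier_mat N N"
    and tn: "trace_norm M = (\<Sum>i<N. sqrt (Re (B $$ (i,i))))" and nonneg: "\<And>i. i < N \<Longrightarrow> 0 \<le> Re (B $$ (i,i))"
    using trace_norm_triangular[OF M] by blast
  have "(\<Sum>i<N. Re (B $$ (i,i))) = Re (mat_trace (mat_adjoint M * M))"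
    using B mat_trace_similar[OF sim] by (simp add: mat_trace_def)
  also have "\<dots> = (\<Sum>i<N. \<Sum>j<N. (cmod (M $$ (i,j)))\<^sup>2)"
    by (simp add: mat_trace_adjoint_mult[OF M])
  finally show ?thesis
    unfolding tn using sum_sqrt_le_sqrt_card_sum[of N "\<lambda>i. Re (B $$ (i,i))"] nonneg by simp
qed

text \<open>Every row of a Pauli string has a single nonzero entry, of modulus 1.\<close>
lemma frobenius_pauli_sum_le:
  fixes c :: "'b \<Rightarrow> real" and Qs :: "'b \<Rightarrow> pauli list"
  assumes "finite S" and len: "\<And>x. x \<in> S \<Longrightarrow> length (Qs x) = n"
  defines "M \<equiv> mat_sum (2^n) S (\<lambda>x. complex_of_real (c x) \<cdot>\<^sub>m pauli_mat (Qs x))"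
  shows "(\<Sum>i<2^n. \<Sum>j<2^n. (cmod (M $$ (i,j)))\<^sup>2) \<le> 2^n * (\<Sum>x\<in>S. \<bar>c x\<bar>)\<^sup>2"
proof -
  let ?N = "2^n :: nat" and ?C = "\<Sum>x\<in>S. \<bar>c x\<bar>"
  define a where "a i j = (\<Sum>x\<in>S. \<bar>c x\<bar> * cmod (pauli_mat (Qs x) $$ (i,j)))" for i j
  have sq: "(cmod (M $$ (i,j)))\<^sup>2 \<le> ?C * a i j" if "i < ?N" "j < ?N" for i j
  proof -
    have "cmod (M $$ (i,j)) \<le> a i j"
      using that len unfolding M_def a_def by (simp add: sum_norm_le norm_mult)
    then have "(cmod (M $$ (i,j)))\<^sup>2 \<le> a i j * a i j"
      unfolding power2_eq_square by (intro mult_mono) (auto intro: order_trans[OF norm_ge_zero])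
    also have "\<dots> \<le> ?C * a i j"
      unfolding a_def using that len pauli_mat_entry_norm_le
      by (intro mult_right_mono sum_mono sum_nonneg) (simp_all add: mult_left_le)
    finally show ?thesis .
  qed
  have rows: "(\<Sum>j<?N. a i j) = ?C" if "i < ?N" for i
  proof -
    have "(\<Sum>j<?N. a i j) = (\<Sum>x\<in>S. \<bar>c x\<bar> * (\<Sum>j<?N. cmod (pauli_mat (Qs x) $$ (i,j))))"
      unfolding a_def by (subst sum.swap) (simp add: sum_distrib_left)
    also have "\<dots> = ?C"
    proof (rule sum.cong[OF refl])
      fix x assume "x \<in> S"
      then show "\<bar>c x\<bar> * (\<Sum>j<?N. cmod (pauli_mat (Qs x) $$ (i,j))) = \<bar>c x\<bar>"
        using pauli_mat_row_norm_sum[of i "Qs x"] len that by simp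
    qed
    finally show ?thesis .
  qed
  have "(\<Sum>i<?N. \<Sum>j<?N. (cmod (M $$ (i,j)))\<^sup>2) \<le> (\<Sum>i<?N. \<Sum>j<?N. ?C * a i j)"
    using sq by (intro sum_mono) auto
  also have "\<dots> = 2^n * ?C\<^sup>2"
    by (simp add: sum_distrib_left[symmetric] rows power2_eq_square)
  finally show ?thesis .
qed

lemma trace_norm_pauli_sum_le:
  fixes c :: "'b \<Rightarrow> real" and Qs :: "'b \<Rightarrow> pauli list"
  assumes "finite S" and "\<And>x. x \<in> S \<Longrightarrow> length (Qs x) = n"
  shows "trace_norm (mat_sum (2^n) S (\<lambda>x. complex_of_real (c x) \<cdot>\<^sub>m pauli_mat (Qs x)))
    \<le> 2^n * (\<Sum>x\<in>S. \<bar>c x\<bar>)"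
proof -
  let ?C = "\<Sum>x\<in>S. \<bar>c x\<bar>"
  have "trace_norm (mat_sum (2^n) S (\<lambda>x. complex_of_real (c x) \<cdot>\<^sub>m pauli_mat (Qs x)))
      \<le> sqrt (2^n * (\<Sum>i<2^n. \<Sum>j<2^n.
          (cmod (mat_sum (2^n) S (\<lambda>x. complex_of_real (c x) \<cdot>\<^sub>m pauli_mat (Qs x)) $$ (i,j)))\<^sup>2))"
    using trace_norm_le_frobenius[OF mat_sum_carrier[of "2^n"]] by simp
  also have "\<dots> \<le> sqrt (2^n * (2^n * ?C\<^sup>2))"
    using frobenius_pauli_sum_le[OF assms] by (intro real_sqrt_le_mono mult_left_mono) auto
  also have "\<dots> = 2^n * ?C"
    by (simp add: real_sqrt_mult power2_eq_square sum_nonneg)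
  finally show ?thesis .
qed

section \<open>Discarded paths\<close>

lemma sum_above_threshold_le:
  fixes a :: "'b \<Rightarrow> real" and r :: "'b \<Rightarrow> nat"
  assumes "finite S" and a: "\<And>x. x \<in> S \<Longrightarrow> 0 \<le> a x" and "1 \<le> y"
  shows "(\<Sum>x\<in>{x\<in>S. k < r x}. a x) \<le> (\<Sum>x\<in>S. a x * y ^ r x) / y ^ k"
proof -
  have "(\<Sum>x\<in>{x\<in>S. k < r x}. a x) \<le> (\<Sum>x\<in>{x\<in>S. k < r x}. a x * y ^ r x / y ^ k)"
  proof (rule sum_mono)
    fix x assume x: "x \<in> {x\<in>S. k < r x}"
    have "a x * y ^ k \<le> a x * y ^ r x"
      using x a \<open>1 \<le> y\<close> by (intro mult_left_mono power_increasing) auto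
    then show "a x \<le> a x * y ^ r x / y ^ k"
      using \<open>1 \<le> y\<close> by (simp add: pos_le_divide_eq)
  qed
  also have "\<dots> \<le> (\<Sum>x\<in>S. a x * y ^ r x / y ^ k)"
    using assms by (intro sum_mono2) auto
  also have "\<dots> = (\<Sum>x\<in>S. a x * y ^ r x) / y ^ k"
    by (simp add: sum_divide_distrib)
  finally show ?thesis .
qed

lemma moment_bound_at_optimum:
  fixes \<tau> :: real and L k :: nat
  assumes "0 < \<tau>" and "0 < L" and "0 < k"
  defines "y \<equiv> real k / (real L * \<tau>)"
  shows "(exp \<tau> * (1 + y * \<tau>)) ^ L / y ^ k \<le> exp (\<tau> * real L) * (exp 1 * real L * \<tau> / real k) ^ k"
proof -
  have "(exp \<tau> * (1 + y * \<tau>)) ^ L = exp (\<tau> * real L) * (1 + real k / real L) ^ L"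
    using assms by (simp add: y_def power_mult_distrib exp_of_nat_mult[symmetric] mult.commute)
  also have "\<dots> \<le> exp (\<tau> * real L) * exp (real k)"
    using assms by (intro mult_left_mono exp_ge_one_plus_x_over_n_power_n) auto
  finally have "(exp \<tau> * (1 + y * \<tau>)) ^ L / y ^ k \<le> exp (\<tau> * real L) * (exp 1 ^ k / y ^ k)"
    using assms by (simp add: y_def divide_right_mono exp_of_nat_mult[symmetric])
  also have "exp 1 ^ k / y ^ k = (exp 1 * real L * \<tau> / real k) ^ k"
    using assms by (simp add: y_def power_divide[symmetric] field_simps)
  finally show ?thesis .
qed

lemma tail_path_coef_sum_le:
  assumes gates: "\<forall>sp\<in>set Ps. signed_pauli_gate n sp" and "0 < \<tau>" and "1 \<le> length Ps"
    and k: "exp 1 * real (length Ps) * \<tau> < real k"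
  shows "(\<Sum>\<gamma>\<in>{\<gamma>\<in>pauli_paths n Ps. k < path_r Ps \<gamma>}. \<bar>path_coef \<tau> Ps \<gamma>\<bar>)
    \<le> exp (\<tau> * real (length Ps)) * (exp 1 * real (length Ps) * \<tau> / real k) ^ k"
proof -
  let ?L = "length Ps"
  define y where "y = real k / (real ?L * \<tau>)"
  have pos: "0 < real ?L * \<tau>" using \<open>0 < \<tau>\<close> \<open>1 \<le> ?L\<close> by (intro mult_pos_pos) auto
  moreover have "real ?L * \<tau> \<le> exp 1 * real ?L * \<tau>"
    using \<open>0 < \<tau>\<close> by (simp add: mult_right_mono mult_le_cancel_right1)
  ultimately have "1 \<le> y"
    using k by (simp add: y_def le_divide_eq)
  have "0 < exp 1 * (real ?L * \<tau>)" using pos by simp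
  then have "0 < k" using k by (simp add: mult.assoc)
  have "(\<Sum>\<gamma>\<in>{\<gamma>\<in>pauli_paths n Ps. k < path_r Ps \<gamma>}. \<bar>path_coef \<tau> Ps \<gamma>\<bar>)
      \<le> (\<Sum>\<gamma>\<in>pauli_paths n Ps. \<bar>path_coef \<tau> Ps \<gamma>\<bar> * y ^ path_r Ps \<gamma>) / y ^ k"
    using \<open>1 \<le> y\<close> by (intro sum_above_threshold_le finite_pauli_paths) auto
  also have "\<dots> \<le> (exp \<tau> * (1 + y * \<tau>)) ^ ?L / y ^ k"
    using weighted_path_coef_sum_le[OF gates, of \<tau> y] \<open>0 < \<tau>\<close> \<open>1 \<le> y\<close>
    by (intro divide_right_mono) auto
  also have "\<dots> \<le> exp (\<tau> * real ?L) * (exp 1 * real ?L * \<tau> / real k) ^ k"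
    unfolding y_def using \<open>0 < \<tau>\<close> \<open>1 \<le> ?L\<close> \<open>0 < k\<close>
    by (intro moment_bound_at_optimum) auto
  finally show ?thesis .
qed

lemma A_op_minus_A_trunc:
  assumes "\<forall>sp\<in>set Ps. signed_pauli_gate n sp"
  shows "A_op n \<tau> Ps - A_trunc n \<tau> Ps k = mat_sum (2^n) {\<gamma>\<in>pauli_paths n Ps. k < path_r Ps \<gamma>}
    (\<lambda>\<gamma>. complex_of_real (path_coef \<tau> Ps \<gamma>) \<cdot>\<^sub>m pauli_mat (last \<gamma>))"
proof (rule eq_matI)
  let ?G = "pauli_paths n Ps"
  fix i j assume "i < dim_row (mat_sum (2^n) {\<gamma>\<in>?G. k < path_r Ps \<gamma>}
    (\<lambda>\<gamma>. complex_of_real (path_coef \<tau> Ps \<gamma>) \<cdot>\<^sub>m pauli_mat (last \<gamma>)))"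
    "j < dim_col (mat_sum (2^n) {\<gamma>\<in>?G. k < path_r Ps \<gamma>}
    (\<lambda>\<gamma>. complex_of_real (path_coef \<tau> Ps \<gamma>) \<cdot>\<^sub>m pauli_mat (last \<gamma>)))"
  then have i: "i < 2^n" and j: "j < 2^n" by auto
  let ?f = "\<lambda>\<gamma>. complex_of_real (path_coef \<tau> Ps \<gamma>) * pauli_mat (last \<gamma>) $$ (i, j)"
  have "(\<Sum>\<gamma>\<in>?G. ?f \<gamma>) = (\<Sum>\<gamma>\<in>{\<gamma>\<in>?G. path_r Ps \<gamma> \<le> k}. ?f \<gamma>) + (\<Sum>\<gamma>\<in>{\<gamma>\<in>?G. k < path_r Ps \<gamma>}. ?f \<gamma>)"
    by (subst sum.union_disjoint[symmetric]) (auto simp: finite_pauli_paths intro: sum.cong)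
  moreover have "mat_sum (2^n) {\<gamma>\<in>?G. k < path_r Ps \<gamma>}
      (\<lambda>\<gamma>. complex_of_real (path_coef \<tau> Ps \<gamma>) \<cdot>\<^sub>m pauli_mat (last \<gamma>)) $$ (i, j)
      = (\<Sum>\<gamma>\<in>{\<gamma>\<in>?G. k < path_r Ps \<gamma>}. ?f \<gamma>)"
    using i j by (simp, intro sum.cong refl) (auto dest!: pauli_paths_last_length)
  ultimately show "(A_op n \<tau> Ps - A_trunc n \<tau> Ps k) $$ (i, j) = mat_sum (2^n) {\<gamma>\<in>?G. k < path_r Ps \<gamma>}
    (\<lambda>\<gamma>. complex_of_real (path_coef \<tau> Ps \<gamma>) \<cdot>\<^sub>m pauli_mat (last \<gamma>)) $$ (i, j)"
    using i j pauli_paths_last_length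
    by (simp add: A_op_path_expansion[OF assms] A_trunc_def)
qed (simp_all add: A_op_path_expansion[OF assms] A_trunc_def)

theorem mainTheorem7:
  fixes n L k :: nat and \<tau> :: real and Ps :: "(real \<times> pauli list) list"
  assumes "n \<ge> 1" and "\<tau> > 0" and "L \<ge> 1" and "length Ps = L"
    and "\<forall>sp\<in>set Ps. (fst sp = 1 \<or> fst sp = -1) \<and> length (snd sp) = n
                      \<and> snd sp \<noteq> replicate n PI"
    and "real k > exp 1 * real L * \<tau>"
  shows "trace_norm (A_op n \<tau> Ps - A_trunc n \<tau> Ps k)
           \<le> 2 ^ n * exp (\<tau> * real L) * (exp 1 * real L * \<tau> / real k) ^ k"
proof -
  have gates: "\<forall>sp\<in>set Ps. signed_pauli_gate n sp"
    using assms(5) by (simp add: signed_pauli_gate_def)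
  have "trace_norm (A_op n \<tau> Ps - A_trunc n \<tau> Ps k)
      \<le> 2 ^ n * (\<Sum>\<gamma>\<in>{\<gamma>\<in>pauli_paths n Ps. k < path_r Ps \<gamma>}. \<bar>path_coef \<tau> Ps \<gamma>\<bar>)"
    unfolding A_op_minus_A_trunc[OF gates]
    by (rule trace_norm_pauli_sum_le) (auto simp: finite_pauli_paths pauli_paths_last_length)
  also have "\<dots> \<le> 2 ^ n * (exp (\<tau> * real L) * (exp 1 * real L * \<tau> / real k) ^ k)"
    using tail_path_coef_sum_le[OF gates] assms(2,3,4,6) by (intro mult_left_mono) auto
  finally show ?thesis by (simp add: mult.assoc)
qed

end
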